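(* Let $1\le\alpha\le d$, $k\ge1$, $S_\alpha=(\mathrm{Id}_n+W_\alpha V_\alpha)\cdots(\mathrm{Id}_n+W_1V_1)Z$. With the convention $\dot F=\{H,F\}$, the flow of $H=\frac1k\operatorname{tr}S_\alpha^k$ on $\mathcal C^\times_{n,d,q}$ starting at (the class of) $(X,Z,V_\beta,W_\beta)$ is given by $X(t)=Xe^{-tS_\alpha^k}$, $Z(t)=e^{tS_\alpha^k}Ze^{-tS_\alpha^k}$, $V_\beta(t)=V_\beta e^{-tS_\alpha^k}$ and $W_\beta(t)=e^{tS_\alpha^k}W_\beta$ for $\beta\le\alpha$, $V_\beta(t)=V_\beta$ and $W_\beta(t)=W_\beta$ for $\beta>\alpha$, where $S_\alpha$ is evaluated at the initial point. The flow is complete on $\mathcal C^\times_{n,d,q}$.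
   Context: Fix integers $n\ge1$, $d\ge1$ and $q\in\mathbb C^\times$ not a root of unity. Greek indices range over $\{1,\dots,d\}$; set $o(\alpha,\beta)=0$ if $\alpha=\beta$, $o(\alpha,\beta)=1$ if $\alpha<\beta$, $o(\alpha,\beta)=-1$ if $\alpha>\beta$. Let $\mathcal M^\times_{n,d,q}$ be the affine variety of tuples $(X,Z,V_1,\dots,V_d,W_1,\dots,W_d)$ with $X,Z\in\mathrm{GL}_n(\mathbb C)$, $V_\alpha\in\mathrm{Mat}_{1\times n}(\mathbb C)$, $W_\alpha\in\mathrm{Mat}_{n\times 1}(\mathbb C)$, such that every $\mathrm{Id}_n+W_\alpha V_\alpha$ is invertible and $XZX^{-1}Z^{-1}(\mathrm{Id}_n+W_1V_1)^{-1}\cdots(\mathrm{Id}_n+W_dV_d)^{-1}=q\,\mathrm{Id}_n$. $\mathrm{GL}_n$ acts by $g\cdot(X,Z,V_\alpha,W_\alpha)=(gXg^{-1},gZg^{-1},V_\alpha g^{-1},gW_\alpha)$; the action is free and $\mathcal C^\times_{n,d,q}=\mathcal M^\times_{n,d,q}/\!/\mathrm{GL}_n$ is a smooth affine variety of dimension $2nd$ with $\mathbb C[\mathcal C^\times_{n,d,q}]=\mathbb C[\mathcal M^\times_{n,d,q}]^{\mathrm{GL}_n}$. Write $V_{\alpha,j}$, $W_{\alpha,k}$ for the entries. Let $\{-,-\}$ be the antisymmetric biderivation on functions of $(X,Z,V_\alpha,W_\alpha)$ (Van den Bergh's quasi-Poisson bracket) given by $\{X_{ij},X_{kl}\}=\tfrac12(\delta_{il}(X^2)_{kj}-\delta_{kj}(X^2)_{il})$,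 $\{Z_{ij},Z_{kl}\}=\tfrac12(\delta_{kj}(Z^2)_{il}-\delta_{il}(Z^2)_{kj})$, $\{X_{ij},Z_{kl}\}=\tfrac12((ZX)_{kj}\delta_{il}+\delta_{kj}(XZ)_{il}+Z_{kj}X_{il}-X_{kj}Z_{il})$, $\{U_{ij},W_{\alpha,k}\}=\tfrac12(\delta_{kj}(UW_\alpha)_i-U_{kj}W_{\alpha,i})$, $\{U_{ij},V_{\alpha,l}\}=\tfrac12((V_\alpha U)_j\delta_{il}-V_{\alpha,j}U_{il})$ for $U\in\{X,Z\}$, $\{V_{\alpha,j},V_{\beta,l}\}=\tfrac12 o(\beta,\alpha)(V_{\beta,j}V_{\alpha,l}+V_{\alpha,j}V_{\beta,l})$, $\{W_{\alpha,i},W_{\beta,k}\}=\tfrac12 o(\beta,\alpha)(W_{\beta,k}W_{\alpha,i}+W_{\alpha,k}W_{\beta,i})$, $\{V_{\alpha,j},W_{\beta,k}\}=\delta_{\alpha\beta}(\delta_{kj}+\tfrac12W_{\alpha,k}V_{\alpha,j}+\tfrac12\delta_{kj}V_\alpha W_\alpha)+\tfrac12 o(\alpha,\beta)(\delta_{kj}V_\alpha W_\beta+W_{\beta,k}V_{\alpha,j})$. Restricted to $\mathrm{GL}_n$-invariant functions this bracket induces a non-degenerate Poisson bracket on $\mathcal C^\times_{n,d,q}$ (quasi-Hamiltonian reduction); this is the Poisson bracket $\{-,-\}$ on $\mathcal C^\times_{n,d,q}$. Flows of invariant $H$ are computed on representatives by $\dot M_{ij}=\{H,M_{ij}\}$.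 *)

theory Defs
  imports "HOL-Analysis.Analysis"
begin

text \<open>Coordinates on the space of tuples (X, Z, V_1..V_d, W_1..W_d).
  The matrix size n is the cardinality of the finite index type 'n;
  the Greek indices are natural numbers in {1..d}.\<close>

datatype 'n coord = XC 'n 'n | ZC 'n 'n | VC nat 'n | WC nat 'n

type_synonym 'n pt = "'n coord \<Rightarrow> complex"

definition coords :: "nat \<Rightarrow> 'n coord set" where
  "coords d = {XC i j | i j. True} \<union> {ZC i j | i j. True}
     \<union> {VC a j | a j. a \<in> {1..d}} \<union> {WC a j | a j. a \<in> {1..d}}"

definition Xm :: "'n::finite pt \<Rightarrow> complex^'n^'n" where "Xm p = (\<chi> i j. p (XC i j))"
definition Zm :: "'n::finite pt \<Rightarrow> complex^'n^'n" where "Zm p = (\<chi> i j. p (ZC i j))"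
text \<open>row vector V_a and column vector W_a\<close>
definition Vv :: "'n::finite pt \<Rightarrow> nat \<Rightarrow> complex^'n" where "Vv p a = (\<chi> j. p (VC a j))"
definition Wv :: "'n::finite pt \<Rightarrow> nat \<Rightarrow> complex^'n" where "Wv p a = (\<chi> j. p (WC a j))"

definition Pm :: "'n::finite pt \<Rightarrow> nat \<Rightarrow> complex^'n^'n" where
  "Pm p a = mat 1 + (\<chi> i j. Wv p a $ i * Vv p a $ j)"

fun invprod :: "'n::finite pt \<Rightarrow> nat \<Rightarrow> complex^'n^'n" where
  "invprod p 0 = mat 1"
| "invprod p (Suc a) = invprod p a ** matrix_inv (Pm p (Suc a))"

definition Mx :: "nat \<Rightarrow> complex \<Rightarrow> 'n::finite pt set" where
  "Mx d q = {p. invertible (Xm p) \<and> invertible (Zm p) \<and> (\<forall>a\<in>{1..d}. invertible (Pm p a)) \<and>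
      Xm p ** Zm p ** matrix_inv (Xm p) ** matrix_inv (Zm p) ** invprod p d = mat q}"

fun Sm :: "'n::finite pt \<Rightarrow> nat \<Rightarrow> complex^'n^'n" where
  "Sm p 0 = Zm p"
| "Sm p (Suc a) = Pm p (Suc a) ** Sm p a"

fun mpow :: "complex^'n::finite^'n \<Rightarrow> nat \<Rightarrow> complex^'n^'n" where
  "mpow A 0 = mat 1"
| "mpow A (Suc m) = A ** mpow A m"

definition mexp :: "complex^'n::finite^'n \<Rightarrow> complex^'n^'n" where
  "mexp A = (\<Sum>m. inverse (fact m) *\<^sub>R mpow A m)"

definition msc :: "complex \<Rightarrow> complex^'n::finite^'n \<Rightarrow> complex^'n^'n" where
  "msc t A = (\<chi> i j. t * A $ i $ j)"

definition Ham :: "nat \<Rightarrow> nat \<Rightarrow> 'n::finite pt \<Rightarrow> complex" where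
  "Ham a k p = trace (mpow (Sm p a) k) / of_nat k"

definition osgn :: "nat \<Rightarrow> nat \<Rightarrow> complex" where
  "osgn a b = (if a = b then 0 else if a < b then 1 else -1)"

definition dlt :: "'a \<Rightarrow> 'a \<Rightarrow> complex" where
  "dlt x y = (if x = y then 1 else 0)"

text \<open>Brackets {U_ij, -} for U in {X, Z} against W and V\<close>
definition brUW :: "complex^'n::finite^'n \<Rightarrow> 'n \<Rightarrow> 'n \<Rightarrow> complex^'n \<Rightarrow> 'n \<Rightarrow> complex" where
  "brUW U i j W k = (dlt k j * (U *v W) $ i - U $ k $ j * W $ i) / 2"
definition brUV :: "complex^'n::finite^'n \<Rightarrow> 'n \<Rightarrow> 'n \<Rightarrow> complex^'n \<Rightarrow> 'n \<Rightarrow> complex" where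
  "brUV U i j V l = ((V v* U) $ j * dlt i l - V $ j * U $ i $ l) / 2"

definition sp :: "complex^'n::finite \<Rightarrow> complex^'n \<Rightarrow> complex" where
  "sp V W = (\<Sum>j\<in>UNIV. V $ j * W $ j)"

text \<open>Van den Bergh's quasi-Poisson bracket on coordinate functions, evaluated at a point p.\<close>
fun qbr :: "'n::finite coord \<Rightarrow> 'n coord \<Rightarrow> 'n pt \<Rightarrow> complex" where
  "qbr (XC i j) (XC k l) p = (let X = Xm p in
      (dlt i l * (X ** X) $ k $ j - dlt k j * (X ** X) $ i $ l) / 2)"
| "qbr (ZC i j) (ZC k l) p = (let Z = Zm p in
      (dlt k j * (Z ** Z) $ i $ l - dlt i l * (Z ** Z) $ k $ j) / 2)"
| "qbr (XC i j) (ZC k l) p = (let X = Xm p; Z = Zm p in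
      ((Z ** X) $ k $ j * dlt i l + dlt k j * (X ** Z) $ i $ l + Z $ k $ j * X $ i $ l
        - X $ k $ j * Z $ i $ l) / 2)"
| "qbr (ZC k l) (XC i j) p = - (let X = Xm p; Z = Zm p in
      ((Z ** X) $ k $ j * dlt i l + dlt k j * (X ** Z) $ i $ l + Z $ k $ j * X $ i $ l
        - X $ k $ j * Z $ i $ l) / 2)"
| "qbr (XC i j) (WC a k) p = brUW (Xm p) i j (Wv p a) k"
| "qbr (WC a k) (XC i j) p = - brUW (Xm p) i j (Wv p a) k"
| "qbr (ZC i j) (WC a k) p = brUW (Zm p) i j (Wv p a) k"
| "qbr (WC a k) (ZC i j) p = - brUW (Zm p) i j (Wv p a) k"
| "qbr (XC i j) (VC a l) p = brUV (Xm p) i j (Vv p a) l"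
| "qbr (VC a l) (XC i j) p = - brUV (Xm p) i j (Vv p a) l"
| "qbr (ZC i j) (VC a l) p = brUV (Zm p) i j (Vv p a) l"
| "qbr (VC a l) (ZC i j) p = - brUV (Zm p) i j (Vv p a) l"
| "qbr (VC a j) (VC b l) p = osgn b a * (Vv p b $ j * Vv p a $ l + Vv p a $ j * Vv p b $ l) / 2"
| "qbr (WC a i) (WC b k) p = osgn b a * (Wv p b $ k * Wv p a $ i + Wv p a $ k * Wv p b $ i) / 2"
| "qbr (VC a j) (WC b k) p =
      dlt a b * (dlt k j + Wv p a $ k * Vv p a $ j / 2 + dlt k j * sp (Vv p a) (Wv p a) / 2)
      + osgn a b * (dlt k j * sp (Vv p a) (Wv p b) + Wv p b $ k * Vv p a $ j) / 2"
| "qbr (WC b k) (VC a j) p = - (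
      dlt a b * (dlt k j + Wv p a $ k * Vv p a $ j / 2 + dlt k j * sp (Vv p a) (Wv p a) / 2)
      + osgn a b * (dlt k j * sp (Vv p a) (Wv p b) + Wv p b $ k * Vv p a $ j) / 2)"

definition pd :: "('n pt \<Rightarrow> complex) \<Rightarrow> 'n coord \<Rightarrow> 'n pt \<Rightarrow> complex" where
  "pd H c p = deriv (\<lambda>z. H (p(c := z))) (p c)"

text \<open>{H, x_b}(p) for the biderivation determined by qbr:
  sum over all coordinates a of (dH/dx_a) {x_a, x_b}.\<close>
definition hvf :: "nat \<Rightarrow> ('n::finite pt \<Rightarrow> complex) \<Rightarrow> 'n coord \<Rightarrow> 'n pt \<Rightarrow> complex" where
  "hvf d H b p = (\<Sum>a\<in>coords d. pd H a p * qbr a b p)"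

definition claimed_flow :: "nat \<Rightarrow> nat \<Rightarrow> 'n::finite pt \<Rightarrow> complex \<Rightarrow> 'n pt" where
  "claimed_flow a k p t = (let Sk = mpow (Sm p a) k; E = mexp (msc t Sk); Ei = mexp (msc (- t) Sk) in
     (\<lambda>c. case c of
        XC i j \<Rightarrow> (Xm p ** Ei) $ i $ j
      | ZC i j \<Rightarrow> (E ** Zm p ** Ei) $ i $ j
      | VC b j \<Rightarrow> (if b \<le> a then (Vv p b v* Ei) $ j else p c)
      | WC b j \<Rightarrow> (if b \<le> a then (E *v Wv p b) $ j else p c)))"

end

theory Submission
  imports Defs
begin

text \<open>
  S_a depends polynomially on the coordinates and the bracket is a biderivation, so the
  Hamiltonian vector field of tr(S_a^k)/k follows from the Leibniz rule and cyclicity of the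
  trace once the brackets of S_a with the coordinates are known. These are obtained by
  induction on a from S_a = (Id + W_a V_a) S_(a-1), and give
  dX/dt = -X S_a^k, dZ/dt = [S_a^k, Z], dW_b/dt = S_a^k W_b and dV_b/dt = -V_b S_a^k for b <= a,
  while W_b, V_b stay constant for b > a.
  Along the claimed curve every S_b with b <= a is conjugated by exp(t S_a^k), which commutes
  with S_a^k; hence S_a^k is a constant of motion and the curve solves these linear equations.
  The same conjugation shows that the curve stays on the level set of the moment map.
\<close>

section \<open>The matrix exponential\<close>

lemma mpow_commute: "B ** A = A ** B \<Longrightarrow> B ** mpow A m = mpow A m ** B"
  by (induction m) (simp_all, metis matrix_mul_assoc)

lemma msc_mult_left: "msc t A ** B = msc t (A ** B)"
  by (simp add: msc_def matrix_matrix_mult_def vec_eq_iff sum_distrib_left mult.assoc)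

lemma msc_mult_right: "A ** msc t B = msc t (A ** B)"
  by (simp add: msc_def matrix_matrix_mult_def vec_eq_iff sum_distrib_left mult_ac)

lemma mpow_msc: "mpow (msc t A) m = msc (t^m) (mpow A m)"
proof (induction m)
  case 0 show ?case by (simp add: msc_def mat_def vec_eq_iff)
next
  case (Suc m) then show ?case
    by (simp add: msc_mult_left msc_mult_right) (simp add: msc_def vec_eq_iff mult.assoc)
qed

lemma mpow_entry_bound:
  fixes A :: "complex^'n::finite^'n"
  obtains C :: real where "C \<ge> 0" "\<And>m i j. norm (mpow A m $ i $ j) \<le> C ^ m"
proof -
  define B where "B = (\<Sum>i\<in>UNIV. \<Sum>j\<in>UNIV. norm (A $ i $ j))"
  define C where "C = real CARD('n) * B + 1"
  have entry_le_B: "norm (A $ i $ j) \<le> B" for i j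
  proof -
    have "norm (A $ i $ j) \<le> (\<Sum>j\<in>UNIV. norm (A $ i $ j))"
      by (rule member_le_sum) auto
    also have "\<dots> \<le> B" unfolding B_def
      by (rule member_le_sum[where f="\<lambda>i. \<Sum>j\<in>UNIV. norm (A $ i $ j)"]) (auto intro: sum_nonneg)
    finally show ?thesis .
  qed
  have "B \<ge> 0" unfolding B_def by (auto intro!: sum_nonneg)
  then have "C \<ge> 1" unfolding C_def by simp
  have bound: "norm (mpow A m $ i $ j) \<le> C ^ m" for m i j
  proof (induction m arbitrary: i j)
    case 0 show ?case using \<open>C \<ge> 1\<close> by (simp add: mat_def)
  next
    case (Suc m)
    have "norm (mpow A (Suc m) $ i $ j) = norm (\<Sum>l\<in>UNIV. A $ i $ l * mpow A m $ l $ j)"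
      by (simp add: matrix_matrix_mult_def)
    also have "\<dots> \<le> (\<Sum>l\<in>UNIV. norm (A $ i $ l) * norm (mpow A m $ l $ j))"
      by (rule order_trans[OF norm_sum]) (simp add: norm_mult)
    also have "\<dots> \<le> (\<Sum>l\<in>(UNIV::'n set). B * C ^ m)"
      by (rule sum_mono, rule mult_mono) (use entry_le_B Suc \<open>B \<ge> 0\<close> in auto)
    also have "\<dots> = real CARD('n) * B * C ^ m" by simp
    also have "\<dots> \<le> C * C ^ m"
      by (rule mult_right_mono) (use \<open>C \<ge> 1\<close> in \<open>auto simp: C_def\<close>)
    finally show ?case by simp
  qed
  from \<open>C \<ge> 1\<close> have "C \<ge> 0" by simp
  from this bound show ?thesis by (rule that)
qed

lemma summable_norm_mexp_series:
  fixes A :: "complex^'n::finite^'n"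
  shows "summable (\<lambda>m. norm ((mpow A m $ i $ j / fact m) * t ^ m))"
proof -
  obtain C where C: "C \<ge> 0" "\<And>m i j. norm (mpow A m $ i $ j) \<le> C ^ m"
    using mpow_entry_bound[of A] by metis
  show ?thesis
  proof (rule summable_comparison_test')
    show "summable (\<lambda>m. inverse (fact m) * (C * norm t) ^ m)" by (rule summable_exp)
    fix m :: nat
    have "norm ((mpow A m $ i $ j / fact m) * t ^ m) = norm (mpow A m $ i $ j) / fact m * norm t ^ m"
      by (simp add: norm_mult norm_divide norm_power)
    also have "\<dots> \<le> C ^ m / fact m * norm t ^ m"
      by (intro mult_right_mono divide_right_mono C(2)) auto
    also have "\<dots> = inverse (fact m) * (C * norm t) ^ m"
      by (simp add: power_mult_distrib field_simps)
    finally show "norm (norm ((mpow A m $ i $ j / fact m) * t ^ m)) \<le> inverse (fact m) * (C * norm t) ^ m"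
      by simp
  qed
qed

lemma summable_mexp_series:
  fixes A :: "complex^'n::finite^'n"
  shows "summable (\<lambda>m. (mpow A m $ i $ j / fact m) * t ^ m)"
  by (rule summable_norm_cancel[OF summable_norm_mexp_series])

lemma mexp_entry:
  fixes A :: "complex^'n::finite^'n"
  shows "mexp (msc t A) $ i $ j = (\<Sum>m. (mpow A m $ i $ j / fact m) * t ^ m)"
proof -
  let ?f = "\<lambda>m. inverse (fact m) *\<^sub>R mpow (msc t A) m"
  have entry: "?f m $ i $ j = (mpow A m $ i $ j / fact m) * t ^ m" for m i j
    by (simp add: mpow_msc) (simp add: msc_def vector_scaleR_component scaleR_conv_of_real field_simps)
  define G where "G = (\<lambda>m. \<Sum>i\<in>UNIV. \<Sum>j\<in>UNIV. norm ((mpow A m $ i $ j / fact m) * t ^ m))"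
  have summable_G: "summable G" unfolding G_def
    by (intro summable_sum summable_norm_mexp_series)
  have norm_le_G: "norm (?f m) \<le> G m" for m
  proof -
    have "norm (?f m) \<le> (\<Sum>i\<in>UNIV. norm (?f m $ i))"
      unfolding norm_vec_def by (rule L2_set_le_sum) simp
    also have "\<dots> \<le> (\<Sum>i\<in>UNIV. \<Sum>j\<in>UNIV. norm (?f m $ i $ j))"
      by (rule sum_mono) (unfold norm_vec_def, rule L2_set_le_sum, simp)
    also have "\<dots> = G m" unfolding G_def by (simp only: entry)
    finally show ?thesis .
  qed
  have "summable (\<lambda>m. norm (?f m))"
    by (rule summable_comparison_test'[OF summable_G]) (use norm_le_G in simp)
  then have summable_f: "summable ?f" by (rule summable_norm_cancel)
  have "bounded_linear (\<lambda>x::complex^'n^'n. x $ i $ j)"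
    using bounded_linear_compose[OF bounded_linear_vec_nth[of j] bounded_linear_vec_nth[of i]]
    by (simp add: o_def)
  from bounded_linear.suminf[OF this summable_f]
  have "mexp (msc t A) $ i $ j = (\<Sum>m. ?f m $ i $ j)"
    unfolding mexp_def by simp
  then show ?thesis by (simp only: entry)
qed

lemma mult_mexp_entry:
  fixes A :: "complex^'n::finite^'n"
  shows "(B ** mexp (msc t A)) $ i $ j = (\<Sum>m. ((B ** mpow A m) $ i $ j / fact m) * t ^ m)"
proof -
  have "(B ** mexp (msc t A)) $ i $ j = (\<Sum>l\<in>UNIV. B$i$l * (\<Sum>m. (mpow A m $ l $ j / fact m) * t^m))"
    by (simp only: matrix_matrix_mult_def vec_lambda_beta mexp_entry)
  also have "\<dots> = (\<Sum>l\<in>UNIV. \<Sum>m. B$i$l * ((mpow A m $ l $ j / fact m) * t^m))"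
    by (intro sum.cong refl, rule suminf_mult[OF summable_mexp_series, symmetric])
  also have "\<dots> = (\<Sum>m. \<Sum>l\<in>UNIV. B$i$l * ((mpow A m $ l $ j / fact m) * t^m))"
    by (rule suminf_sum[symmetric]) (intro summable_mult summable_mexp_series)
  also have "\<dots> = (\<Sum>m. ((B ** mpow A m) $ i $ j / fact m) * t ^ m)"
    by (rule arg_cong[where f=suminf], rule ext)
       (simp add: matrix_matrix_mult_def sum_distrib_left sum_distrib_right sum_divide_distrib mult_ac)
  finally show ?thesis .
qed

lemma mexp_mult_entry:
  fixes A :: "complex^'n::finite^'n"
  shows "(mexp (msc t A) ** B) $ i $ j = (\<Sum>m. ((mpow A m ** B) $ i $ j / fact m) * t ^ m)"
proof -
  have "(mexp (msc t A) ** B) $ i $ j = (\<Sum>l\<in>UNIV. (\<Sum>m. (mpow A m $ i $ l / fact m) * t^m) * B$l$j)"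
    by (simp only: matrix_matrix_mult_def vec_lambda_beta mexp_entry)
  also have "\<dots> = (\<Sum>l\<in>UNIV. \<Sum>m. ((mpow A m $ i $ l / fact m) * t^m) * B$l$j)"
    by (intro sum.cong refl, rule suminf_mult2[OF summable_mexp_series])
  also have "\<dots> = (\<Sum>m. \<Sum>l\<in>UNIV. ((mpow A m $ i $ l / fact m) * t^m) * B$l$j)"
    by (rule suminf_sum[symmetric]) (intro summable_mult2 summable_mexp_series)
  also have "\<dots> = (\<Sum>m. ((mpow A m ** B) $ i $ j / fact m) * t ^ m)"
    by (rule arg_cong[where f=suminf], rule ext)
       (simp add: matrix_matrix_mult_def sum_distrib_left sum_distrib_right sum_divide_distrib mult_ac)
  finally show ?thesis .
qed

lemma mexp_msc_commute:
  fixes A :: "complex^'n::finite^'n"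
  assumes "B ** A = A ** B"
  shows "B ** mexp (msc t A) = mexp (msc t A) ** B"
  using mpow_commute[OF assms] by (simp add: vec_eq_iff mult_mexp_entry mexp_mult_entry)

lemma mexp_msc_0:
  fixes A :: "complex^'n::finite^'n"
  shows "mexp (msc 0 A) = mat 1"
proof -
  have "mexp (msc 0 A) $ i $ j = mat 1 $ i $ j" for i j
    using powser_zero[of "\<lambda>m. mpow A m $ i $ j / fact m"] by (simp add: mexp_entry)
  then show ?thesis by (simp add: vec_eq_iff)
qed

definition has_matrix_derivative ::
    "(complex \<Rightarrow> complex^'n::finite^'m::finite) \<Rightarrow> complex^'n^'m \<Rightarrow> complex \<Rightarrow> bool" where
  "has_matrix_derivative F F' t \<longleftrightarrow> (\<forall>i j. ((\<lambda>s. F s $ i $ j) has_field_derivative F' $ i $ j) (at t))"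

lemma has_matrix_derivative_mult:
  assumes "has_matrix_derivative F F' t" "has_matrix_derivative G G' t"
  shows "has_matrix_derivative (\<lambda>s. F s ** G s) (F' ** G t + F t ** G') t"
  unfolding has_matrix_derivative_def
proof (intro allI)
  fix i j
  have "((\<lambda>s. \<Sum>l\<in>UNIV. F s $ i $ l * G s $ l $ j) has_field_derivative
      (\<Sum>l\<in>UNIV. F' $ i $ l * G t $ l $ j + F t $ i $ l * G' $ l $ j)) (at t)"
    using assms unfolding has_matrix_derivative_def
    by (intro DERIV_sum) (auto intro!: derivative_eq_intros)
  then show "((\<lambda>s. (F s ** G s) $ i $ j) has_field_derivative (F' ** G t + F t ** G') $ i $ j) (at t)"
    by (simp add: matrix_matrix_mult_def sum.distrib)
qed

lemma has_matrix_derivative_const: "has_matrix_derivative (\<lambda>s. B) 0 t"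
  unfolding has_matrix_derivative_def by simp

lemma has_matrix_derivative_mexp:
  fixes A :: "complex^'n::finite^'n"
  shows "has_matrix_derivative (\<lambda>s. mexp (msc s A)) (A ** mexp (msc t A)) t"
  unfolding has_matrix_derivative_def
proof (intro allI)
  fix i j
  define c where "c = (\<lambda>m. mpow A m $ i $ j / fact m)"
  have series: "(\<lambda>s. mexp (msc s A) $ i $ j) = (\<lambda>s. \<Sum>m. c m * s ^ m)"
    by (simp add: mexp_entry c_def)
  have diffs_c: "diffs c m = (A ** mpow A m) $ i $ j / fact m" for m
    by (simp add: diffs_def c_def field_simps del: of_nat_Suc)
  have "((\<lambda>s. \<Sum>m. c m * s ^ m) has_field_derivative (\<Sum>m. diffs c m * t ^ m)) (at t)"
    by (rule termdiffs_strong_converges_everywhere) (unfold c_def, rule summable_mexp_series)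
  then show "((\<lambda>s. mexp (msc s A) $ i $ j) has_field_derivative (A ** mexp (msc t A)) $ i $ j) (at t)"
    by (simp add: series diffs_c mult_mexp_entry)
qed

lemma has_matrix_derivative_mexp_neg:
  fixes A :: "complex^'n::finite^'n"
  shows "has_matrix_derivative (\<lambda>s. mexp (msc (-s) A)) (- (A ** mexp (msc (-t) A))) t"
  unfolding has_matrix_derivative_def
proof (intro allI)
  fix i j
  have "((\<lambda>s. mexp (msc s A) $ i $ j) has_field_derivative (A ** mexp (msc (-t) A)) $ i $ j) (at (-t))"
    using has_matrix_derivative_mexp[of A "-t"] unfolding has_matrix_derivative_def by blast
  from DERIV_chain2[OF this DERIV_minus[OF DERIV_ident]]
  show "((\<lambda>s. mexp (msc (-s) A) $ i $ j) has_field_derivative (- (A ** mexp (msc (-t) A))) $ i $ j) (at t)"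
    by simp
qed

lemma matrix_mult_uminus_right: "(B::'a::ring_1^'n::finite^'m) ** (- A) = - (B ** A)"
  by (simp add: matrix_matrix_mult_def vec_eq_iff sum_negf)

lemma mexp_msc_inverse:
  fixes A :: "complex^'n::finite^'n"
  shows "mexp (msc t A) ** mexp (msc (-t) A) = mat 1"
proof -
  have "(mexp (msc t A) ** mexp (msc (-t) A)) $ i $ j = mat 1 $ i $ j" for i j
  proof -
    let ?g = "\<lambda>s. (mexp (msc s A) ** mexp (msc (-s) A)) $ i $ j"
    have "(?g has_field_derivative 0) (at s within UNIV)" for s
    proof -
      have "has_matrix_derivative (\<lambda>s. mexp (msc s A) ** mexp (msc (-s) A))
         ((A ** mexp (msc s A)) ** mexp (msc (-s) A) + mexp (msc s A) ** (- (A ** mexp (msc (-s) A)))) s"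
        by (rule has_matrix_derivative_mult[OF has_matrix_derivative_mexp has_matrix_derivative_mexp_neg])
      moreover have "(A ** mexp (msc s A)) ** mexp (msc (-s) A) + mexp (msc s A) ** (- (A ** mexp (msc (-s) A))) = 0"
        using mexp_msc_commute[of A A s] by (simp add: matrix_mult_uminus_right matrix_mul_assoc)
      ultimately show ?thesis unfolding has_matrix_derivative_def by simp
    qed
    then obtain c where "\<forall>s\<in>UNIV. ?g s = c"
      using has_field_derivative_zero_constant[of UNIV ?g] by auto
    then have "?g t = ?g 0" by (metis UNIV_I)
    then show ?thesis by (simp add: mexp_msc_0)
  qed
  then show ?thesis by (simp add: vec_eq_iff)
qed

section \<open>The ring of square matrices\<close>

text \<open>Matrix identities are proved in a copy of the square matrices whose multiplication is
  the matrix product, so that they become identities in a ring_1.\<close>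

typedef (overloaded) ('n::finite) sqmat = "UNIV :: (complex^'n^'n) set"
  morphisms mtx Sq by simp

setup_lifting type_definition_sqmat

lemma matrix_add_rdistrib: "((B::'a::semiring_1^'n::finite^'m) + C) ** A = B ** A + C ** A"
  by (simp add: matrix_matrix_mult_def vec_eq_iff sum.distrib distrib_right)

instantiation sqmat :: (finite) ring_1
begin
lift_definition zero_sqmat :: "'a sqmat" is "0" .
lift_definition one_sqmat :: "'a sqmat" is "mat 1" .
lift_definition plus_sqmat :: "'a sqmat \<Rightarrow> 'a sqmat \<Rightarrow> 'a sqmat" is "(+)" .
lift_definition minus_sqmat :: "'a sqmat \<Rightarrow> 'a sqmat \<Rightarrow> 'a sqmat" is "(-)" .
lift_definition uminus_sqmat :: "'a sqmat \<Rightarrow> 'a sqmat" is "uminus" .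
lift_definition times_sqmat :: "'a sqmat \<Rightarrow> 'a sqmat \<Rightarrow> 'a sqmat" is "(**)" .
instance
proof
  fix a b c :: "'a sqmat"
  show "a * b * c = a * (b * c)" by transfer (simp add: matrix_mul_assoc)
  show "1 * a = a" by transfer simp
  show "a * 1 = a" by transfer simp
  show "(a + b) * c = a * c + b * c" by transfer (rule matrix_add_rdistrib)
  show "a * (b + c) = a * b + a * c" by transfer (rule matrix_add_ldistrib)
  show "a + b + c = a + (b + c)" by transfer (simp add: add.assoc)
  show "a + b = b + a" by transfer (simp add: add.commute)
  show "0 + a = a" by transfer simp
  show "- a + a = 0" by transfer simp
  show "a - b = a + - b" by transfer simp
  show "(0::'a sqmat) \<noteq> 1" by transfer (simp add: vec_eq_iff mat_def)
qed
end

lemma Sq_mult: "Sq (A ** B) = Sq A * Sq B"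
  by (simp add: times_sqmat.abs_eq)
lemma Sq_add: "Sq (A + B) = Sq A + Sq B"
  by (simp add: plus_sqmat.abs_eq)
lemma Sq_diff: "Sq (A - B) = Sq A - Sq B"
  by (simp add: minus_sqmat.abs_eq)
lemma Sq_uminus: "Sq (- A) = - Sq A"
  by (simp add: uminus_sqmat.abs_eq)
lemma Sq_one: "Sq (mat 1) = 1"
  by (simp add: one_sqmat.abs_eq)
lemma Sq_zero: "Sq 0 = 0"
  by (simp add: zero_sqmat.abs_eq)

lemmas Sq_simps = Sq_mult Sq_add Sq_diff Sq_uminus Sq_one Sq_zero

lemma Sq_eqI: "Sq A = Sq B \<Longrightarrow> A = B"
  by (simp add: Sq_inject)

lemma Sq_mpow: "Sq (mpow A m) = Sq A ^ m"
  by (induction m) (simp_all add: Sq_simps)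

lemma Sq_commute: "A ** B = B ** A \<Longrightarrow> Sq A * Sq B = Sq B * Sq A"
  by (simp add: Sq_mult[symmetric])

lemma Sq_inverse_eq_1: "A ** B = mat 1 \<Longrightarrow> Sq A * Sq B = 1"
  by (simp add: Sq_mult[symmetric] Sq_one)

definition tr :: "'n::finite sqmat \<Rightarrow> complex" where "tr x = trace (mtx x)"

lemma tr_Sq: "tr (Sq A) = trace A"
  by (simp add: tr_def Sq_inverse)
lemma tr_commute: "tr (x * y) = tr (y * x)"
  unfolding tr_def by transfer (rule trace_mul_sym)
lemma tr_add: "tr (x + y) = tr x + tr y"
  unfolding tr_def by transfer (simp add: trace_def sum.distrib)
lemma tr_diff: "tr (x - y) = tr x - tr y"
  unfolding tr_def by transfer (simp add: trace_def sum_subtractf)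
lemma tr_uminus: "tr (- x) = - tr x"
  unfolding tr_def by transfer (simp add: trace_def sum_negf)

lemma tr_rotate3: "tr (a * b * c) = tr (c * a * b)"
  by (metis tr_commute mult.assoc)

lemma power_mult_left_commute: "(s::'a::monoid_mult)^m * (s * y) = s * (s^m * y)"
  by (metis mult.assoc power_commutes)

section \<open>Polynomial functions and the Hamiltonian vector field\<close>

inductive poly_fun :: "('n::finite pt \<Rightarrow> complex) \<Rightarrow> bool" where
  poly_fun_const: "poly_fun (\<lambda>q. c)"
| poly_fun_coord: "poly_fun (\<lambda>q. q x)"
| poly_fun_add: "poly_fun F \<Longrightarrow> poly_fun G \<Longrightarrow> poly_fun (\<lambda>q. F q + G q)"
| poly_fun_mult: "poly_fun F \<Longrightarrow> poly_fun G \<Longrightarrow> poly_fun (\<lambda>q. F q * G q)"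
| poly_fun_sum: "(\<And>i. poly_fun (F i)) \<Longrightarrow> poly_fun (\<lambda>q. \<Sum>i\<in>(UNIV::'n set). F i q)"

lemma pd_eqI: "((\<lambda>z. F (q(c:=z))) has_field_derivative D) (at (q c)) \<Longrightarrow> pd F c q = D"
  unfolding pd_def by (rule DERIV_imp_deriv)

lemma has_field_derivative_pd:
  "((\<lambda>z. F (q(c:=z))) has_field_derivative D) (at (q c)) \<Longrightarrow>
   ((\<lambda>z. F (q(c:=z))) has_field_derivative pd F c q) (at (q c))"
  using pd_eqI by metis

lemma poly_fun_has_pd:
  "poly_fun F \<Longrightarrow> ((\<lambda>z. F (q(c:=z))) has_field_derivative pd F c q) (at (q c))"
proof (induction rule: poly_fun.induct)
  case (poly_fun_coord x)
  have "((\<lambda>z. (q(c:=z)) x) has_field_derivative (if x = c then 1 else 0)) (at (q c))"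
    by (cases "x = c") (auto intro!: derivative_eq_intros)
  then show ?case by (rule has_field_derivative_pd)
next
  case (poly_fun_const c')
  show ?case by (rule has_field_derivative_pd) (rule DERIV_const)
next
  case (poly_fun_add F G)
  show ?case by (rule has_field_derivative_pd, rule DERIV_add[OF poly_fun_add.IH])
next
  case (poly_fun_mult F G)
  show ?case by (rule has_field_derivative_pd, rule DERIV_mult[OF poly_fun_mult.IH])
next
  case (poly_fun_sum F)
  show ?case by (rule has_field_derivative_pd, rule DERIV_sum) (rule poly_fun_sum.IH)
qed

lemma pd_const: "pd (\<lambda>q. c) x q = 0"
  by (rule pd_eqI) (rule DERIV_const)

lemma pd_coord: "pd (\<lambda>q. q y) x q = (if y = x then 1 else 0)"
  by (rule pd_eqI) (cases "y = x"; auto intro!: derivative_eq_intros)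

lemma pd_add: "poly_fun F \<Longrightarrow> poly_fun G \<Longrightarrow> pd (\<lambda>q. F q + G q) x q = pd F x q + pd G x q"
  by (rule pd_eqI) (intro DERIV_add poly_fun_has_pd)

lemma pd_mult:
  assumes "poly_fun F" "poly_fun G"
  shows "pd (\<lambda>q. F q * G q) x q = pd F x q * G q + F q * pd G x q"
proof -
  have "((\<lambda>z. F (q(x:=z)) * G (q(x:=z))) has_field_derivative
      pd F x q * G (q(x:=q x)) + pd G x q * F (q(x:=q x))) (at (q x))"
    by (rule DERIV_mult[OF poly_fun_has_pd[OF assms(1)] poly_fun_has_pd[OF assms(2)]])
  then show ?thesis by (intro pd_eqI) (simp add: mult.commute)
qed

lemma pd_sum:
  "(\<And>i. i \<in> A \<Longrightarrow> poly_fun (F i)) \<Longrightarrow> pd (\<lambda>q. \<Sum>i\<in>A. F i q) x q = (\<Sum>i\<in>A. pd (F i) x q)"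
  by (rule pd_eqI) (intro DERIV_sum poly_fun_has_pd, auto)

lemma finite_coords: "finite (coords d :: 'n::finite coord set)"
proof -
  have "coords d \<subseteq> (\<lambda>(i,j). XC i j) ` UNIV \<union> (\<lambda>(i,j). ZC i j) ` UNIV \<union>
      (\<lambda>(a,j). VC a j) ` ({1..d} \<times> UNIV) \<union> (\<lambda>(a,j). WC a j) ` ({1..d} \<times> UNIV)"
    unfolding coords_def by force
  then show ?thesis by (rule finite_subset) auto
qed

lemma ZC_in_coords: "ZC i j \<in> coords d"
  unfolding coords_def by auto
lemma WC_in_coords: "b \<in> {1..d} \<Longrightarrow> WC b i \<in> coords d"
  unfolding coords_def by auto
lemma VC_in_coords: "b \<in> {1..d} \<Longrightarrow> VC b i \<in> coords d"
  unfolding coords_def by auto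

lemma hvf_const: "hvf d (\<lambda>q. c) x q = 0"
  by (simp add: hvf_def pd_const)

lemma hvf_coord:
  assumes "y \<in> coords d"
  shows "hvf d (\<lambda>q. q y) x q = qbr y x q"
proof -
  have "hvf d (\<lambda>q. q y) x q = (\<Sum>a\<in>coords d. if y = a then qbr a x q else 0)"
    unfolding hvf_def pd_coord by (rule sum.cong) auto
  then show ?thesis using assms by (simp add: finite_coords)
qed

lemma hvf_add: "poly_fun F \<Longrightarrow> poly_fun G \<Longrightarrow> hvf d (\<lambda>q. F q + G q) x q = hvf d F x q + hvf d G x q"
  by (simp add: hvf_def pd_add distrib_right sum.distrib)

lemma hvf_mult:
  "poly_fun F \<Longrightarrow> poly_fun G \<Longrightarrow> hvf d (\<lambda>q. F q * G q) x q = hvf d F x q * G q + F q * hvf d G x q"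
  unfolding hvf_def sum_distrib_left sum_distrib_right sum.distrib[symmetric]
  by (rule sum.cong) (simp_all add: pd_mult algebra_simps)

lemma hvf_sum:
  "finite A \<Longrightarrow> (\<And>i. i \<in> A \<Longrightarrow> poly_fun (F i)) \<Longrightarrow>
   hvf d (\<lambda>q. \<Sum>i\<in>A. F i q) x q = (\<Sum>i\<in>A. hvf d (F i) x q)"
  unfolding hvf_def by (simp add: pd_sum sum_distrib_right) (rule sum.swap)

section \<open>Brackets of S with the coordinates\<close>

definition poly_mat :: "('n::finite pt \<Rightarrow> complex^'n^'n) \<Rightarrow> bool" where
  "poly_mat M \<longleftrightarrow> (\<forall>i j. poly_fun (\<lambda>q. M q $ i $ j))"

definition mat_bracket :: "nat \<Rightarrow> ('n::finite pt \<Rightarrow> complex^'n^'n) \<Rightarrow> 'n coord \<Rightarrow> 'n pt \<Rightarrow> complex^'n^'n" where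
  "mat_bracket d M x q = (\<chi> i j. hvf d (\<lambda>q. M q $ i $ j) x q)"

lemma poly_mat_const: "poly_mat (\<lambda>q. B)"
  unfolding poly_mat_def by (auto intro: poly_fun_const)

lemma poly_mat_mult: "poly_mat A \<Longrightarrow> poly_mat B \<Longrightarrow> poly_mat (\<lambda>q. A q ** B q)"
  unfolding poly_mat_def matrix_matrix_mult_def by (auto intro!: poly_fun_sum poly_fun_mult)

lemma poly_mat_mpow: "poly_mat M \<Longrightarrow> poly_mat (\<lambda>q. mpow (M q) m)"
  by (induction m) (simp_all add: poly_mat_const poly_mat_mult)

lemma poly_mat_Zm: "poly_mat Zm"
  unfolding poly_mat_def Zm_def by (auto intro: poly_fun_coord)

lemma poly_mat_Pm: "poly_mat (\<lambda>q. Pm q b)"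
  unfolding poly_mat_def Pm_def Wv_def Vv_def mat_def
  by (auto intro!: poly_fun_add poly_fun_mult poly_fun_coord poly_fun_const)

lemma poly_mat_Sm: "poly_mat (\<lambda>q. Sm q b)"
  by (induction b) (simp_all add: poly_mat_Zm poly_mat_mult poly_mat_Pm)

lemma mat_bracket_const: "mat_bracket d (\<lambda>q. B) x q = 0"
  unfolding mat_bracket_def by (simp add: hvf_const vec_eq_iff)

lemma mat_bracket_mult:
  "poly_mat A \<Longrightarrow> poly_mat B \<Longrightarrow>
   mat_bracket d (\<lambda>q. A q ** B q) x q = mat_bracket d A x q ** B q + A q ** mat_bracket d B x q"
  unfolding mat_bracket_def matrix_matrix_mult_def poly_mat_def
  by (simp add: vec_eq_iff hvf_sum hvf_mult poly_fun_mult sum.distrib)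

lemma mat_bracket_mpow_Suc:
  "poly_mat M \<Longrightarrow> mat_bracket d (\<lambda>q. mpow (M q) (Suc m)) x q =
   mat_bracket d M x q ** mpow (M q) m + M q ** mat_bracket d (\<lambda>q. mpow (M q) m) x q"
  using mat_bracket_mult[of M "\<lambda>q. mpow (M q) m"] by (simp add: poly_mat_mpow)

lemma mat_bracket_Sm_Suc:
  "mat_bracket d (\<lambda>q. Sm q (Suc b)) x q =
   mat_bracket d (\<lambda>q. Pm q (Suc b)) x q ** Sm q b + Pm q (Suc b) ** mat_bracket d (\<lambda>q. Sm q b) x q"
  using mat_bracket_mult[OF poly_mat_Pm[of "Suc b"] poly_mat_Sm[of b]] by simp

lemma mat_bracket_Zm: "mat_bracket d Zm x q = (\<chi> i j. qbr (ZC i j) x q)"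
  unfolding mat_bracket_def Zm_def by (simp add: hvf_coord ZC_in_coords)

lemma mat_bracket_Pm:
  assumes b: "b \<in> {1..d}"
  shows "mat_bracket d (\<lambda>q. Pm q b) x q =
    (\<chi> i j. qbr (WC b i) x q * Vv q b $ j + Wv q b $ i * qbr (VC b j) x q)"
proof -
  have Pm_entry: "(\<lambda>q. Pm q b $ i $ j) = (\<lambda>q. (if i = j then 1 else 0) + q (WC b i) * q (VC b j))" for i j
    by (simp add: Pm_def Wv_def Vv_def mat_def fun_eq_iff)
  have "hvf d (\<lambda>q. (if i = j then 1 else 0) + q (WC b i) * q (VC b j)) x q
     = qbr (WC b i) x q * q (VC b j) + q (WC b i) * qbr (VC b j) x q" for i j
    by (simp add: hvf_add[OF poly_fun_const poly_fun_mult[OF poly_fun_coord poly_fun_coord]]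
        hvf_mult[OF poly_fun_coord poly_fun_coord] hvf_const
        hvf_coord[OF WC_in_coords[OF b]] hvf_coord[OF VC_in_coords[OF b]])
  then show ?thesis unfolding mat_bracket_def Pm_entry by (simp add: Vv_def Wv_def)
qed

lemma tr_mat_bracket_mpow:
  assumes "poly_mat M" and "c * Sq (M q) = Sq (M q) * c"
  shows "tr (c * Sq (mat_bracket d (\<lambda>q. mpow (M q) (Suc m)) x q))
       = of_nat (Suc m) * tr (c * Sq (M q) ^ m * Sq (mat_bracket d M x q))"
  using assms(2)
proof (induction m arbitrary: c)
  case 0
  then show ?case using assms(1) by (simp add: mat_bracket_mpow_Suc mat_bracket_const Sq_simps)
next
  case (Suc m)
  let ?s = "Sq (M q)" and ?b = "Sq (mat_bracket d M x q)"
  let ?B = "Sq (mat_bracket d (\<lambda>q. mpow (M q) (Suc m)) x q)"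
  have "Sq (mat_bracket d (\<lambda>q. mpow (M q) (Suc (Suc m))) x q) = ?b * ?s ^ Suc m + ?s * ?B"
    using assms(1) by (simp only: mat_bracket_mpow_Suc Sq_simps Sq_mpow)
  then have "tr (c * Sq (mat_bracket d (\<lambda>q. mpow (M q) (Suc (Suc m))) x q))
      = tr (c * ?b * ?s ^ Suc m) + tr ((c * ?s) * ?B)"
    by (simp add: algebra_simps tr_add)
  also have "tr ((c * ?s) * ?B) = of_nat (Suc m) * tr (c * ?s * ?s ^ m * ?b)"
    using Suc.IH[of "c * ?s"] Suc.prems by (simp add: mult.assoc)
  also have "tr (c * ?b * ?s ^ Suc m) = tr (c * ?s ^ Suc m * ?b)"
    using tr_commute[of "c * ?b" "?s ^ Suc m"] power_commuting_commutes[OF Suc.prems[symmetric], of "Suc m", symmetric]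
    by (simp add: mult.assoc)
  finally show ?case
    by (simp add: mult.assoc power_commutes algebra_simps)
qed

lemma hvf_Ham_trace:
  assumes "k = Suc m"
  shows "hvf d (Ham a k) x q = tr (Sq (Sm q a) ^ m * Sq (mat_bracket d (\<lambda>q. Sm q a) x q))"
proof -
  have Ham_eq: "Ham a k = (\<lambda>q. (1 / of_nat k) * (\<Sum>i\<in>UNIV. mpow (Sm q a) k $ i $ i))"
    by (simp add: Ham_def trace_def fun_eq_iff)
  have poly: "poly_fun (\<lambda>q. mpow (Sm q a) k $ i $ j)" for i j
    using poly_mat_mpow[OF poly_mat_Sm] unfolding poly_mat_def by blast
  have "hvf d (Ham a k) x q = (1 / of_nat k) * (\<Sum>i\<in>UNIV. hvf d (\<lambda>q. mpow (Sm q a) k $ i $ i) x q)"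
    unfolding Ham_eq
    by (simp only: hvf_mult[OF poly_fun_const poly_fun_sum[where F="\<lambda>i q. mpow (Sm q a) k $ i $ i", OF poly]]
        hvf_const hvf_sum[OF finite poly]) simp
  also have "(\<Sum>i\<in>UNIV. hvf d (\<lambda>q. mpow (Sm q a) k $ i $ i) x q)
      = tr (1 * Sq (mat_bracket d (\<lambda>q. mpow (Sm q a) (Suc m)) x q))"
    by (simp add: trace_def mat_bracket_def tr_Sq assms)
  also have "\<dots> = of_nat (Suc m) * tr (1 * Sq (Sm q a) ^ m * Sq (mat_bracket d (\<lambda>q. Sm q a) x q))"
    by (rule tr_mat_bracket_mpow[OF poly_mat_Sm]) simp
  finally show ?thesis using assms by (simp del: of_nat_Suc)
qed

lemma hvf_Ham_double:
  assumes "k = Suc m"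
  shows "hvf d (Ham a k) x q + hvf d (Ham a k) x q =
    tr (Sq (Sm q a) ^ m * (Sq (mat_bracket d (\<lambda>q. Sm q a) x q) + Sq (mat_bracket d (\<lambda>q. Sm q a) x q)))"
  by (simp add: hvf_Ham_trace[OF assms] distrib_left tr_add)

definition unit_mat :: "'n::finite \<Rightarrow> 'n \<Rightarrow> complex^'n^'n" where
  "unit_mat l k = (\<chi> r s. dlt r l * dlt k s)"

definition outer :: "complex^'n::finite \<Rightarrow> complex^'n \<Rightarrow> complex^'n^'n" where
  "outer w v = (\<chi> i j. w $ i * v $ j)"

lemma dlt_commute: "dlt x y = dlt y x"
  by (auto simp: dlt_def)

lemma sum_mult_dlt: "(\<Sum>r\<in>UNIV. f r * dlt r (l::'n::finite)) = f l"
proof -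
  have "(\<Sum>r\<in>UNIV. f r * dlt r l) = (\<Sum>r\<in>UNIV. if r = l then f r else 0)"
    by (rule sum.cong) (auto simp: dlt_def)
  then show ?thesis by (simp add: sum.delta)
qed

lemma sum_dlt_mult: "(\<Sum>r\<in>UNIV. dlt (k::'n::finite) r * f r) = f k"
  using sum_mult_dlt[of f k] by (simp add: dlt_commute mult.commute)

lemma matrix_matrix_mult_nth: "(A ** B) $ i $ j = (\<Sum>r\<in>UNIV. A $ i $ r * B $ r $ j)"
  by (simp add: matrix_matrix_mult_def)

lemma unit_mat_right: "(A ** unit_mat l k) $ i $ j = A $ i $ l * dlt k j"
proof -
  have "(A ** unit_mat l k) $ i $ j = (\<Sum>r\<in>UNIV. (A $ i $ r * dlt k j) * dlt r l)"
    by (simp add: matrix_matrix_mult_def unit_mat_def mult_ac)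
  then show ?thesis by (simp only: sum_mult_dlt)
qed

lemma unit_mat_left: "(unit_mat l k ** B) $ i $ j = dlt i l * B $ k $ j"
proof -
  have "(unit_mat l k ** B) $ i $ j = (\<Sum>r\<in>UNIV. dlt k r * (dlt i l * B $ r $ j))"
    by (simp add: matrix_matrix_mult_def unit_mat_def mult_ac)
  then show ?thesis by (simp only: sum_dlt_mult)
qed

lemma unit_mat_middle: "(A ** (unit_mat l k ** B)) $ i $ j = A $ i $ l * B $ k $ j"
proof -
  have "(A ** (unit_mat l k ** B)) $ i $ j = (\<Sum>r\<in>UNIV. (A $ i $ r * B $ k $ j) * dlt r l)"
    by (simp only: matrix_matrix_mult_nth[of A] unit_mat_left) (simp add: mult_ac)
  then show ?thesis by (simp only: sum_mult_dlt)
qed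

lemma trace_mult_unit_mat: "trace (M ** unit_mat j i) = M $ i $ j"
  by (simp add: trace_def unit_mat_right mult.commute sum_dlt_mult)

lemma outer_nth: "outer w v $ i $ j = w $ i * v $ j"
  by (simp add: outer_def)

lemma mult_outer_nth: "(A ** outer w v) $ i $ j = (A *v w) $ i * v $ j"
  by (simp add: matrix_matrix_mult_def outer_def matrix_vector_mult_def
      sum_distrib_right sum_distrib_left mult_ac)

lemma outer_mult_nth: "(outer w v ** B) $ i $ j = w $ i * (v v* B) $ j"
  by (simp add: matrix_matrix_mult_def outer_def vector_matrix_mult_def sum_distrib_left mult_ac)

lemma outer_mult_vector_nth: "(outer w v *v x) $ i = w $ i * sp v x"
  by (simp add: outer_def matrix_vector_mult_def sp_def sum_distrib_left mult_ac)

lemma vector_mult_outer_nth: "(x v* outer w v) $ j = sp x w * v $ j"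
  by (simp add: outer_def vector_matrix_mult_def sp_def sum_distrib_right sum_distrib_left mult_ac)

lemma outer_conj: "outer (E *v w) (v v* F) = E ** outer w v ** F"
  by (simp add: vec_eq_iff matrix_matrix_mult_def[of "E ** outer w v" F] mult_outer_nth outer_nth
      vector_matrix_mult_def sum_distrib_left mult_ac)

lemma axis_one_nth: "axis m 1 $ j = dlt m j"
  by (simp add: axis_def dlt_def)

lemma matrix_vector_mult_axis: "(A *v axis m (1::complex)) $ i = A $ i $ m"
proof -
  have "(A *v axis m 1) $ i = (\<Sum>j\<in>UNIV. A $ i $ j * dlt j m)"
    by (simp add: matrix_vector_mult_def axis_one_nth dlt_commute)
  then show ?thesis by (simp only: sum_mult_dlt)
qed

lemma vector_matrix_mult_axis: "(axis m (1::complex) v* A) $ j = A $ m $ j"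
proof -
  have "(axis m 1 v* A) $ j = (\<Sum>i\<in>UNIV. dlt m i * A $ i $ j)"
    by (simp add: vector_matrix_mult_def axis_one_nth)
  then show ?thesis by (simp only: sum_dlt_mult)
qed

lemma sp_axis_right: "sp v (axis m 1) = v $ m"
proof -
  have "sp v (axis m 1) = (\<Sum>j\<in>UNIV. v $ j * dlt j m)"
    by (simp add: sp_def axis_one_nth dlt_commute)
  then show ?thesis by (simp only: sum_mult_dlt)
qed

lemma sp_axis_left: "sp (axis m 1) v = v $ m"
proof -
  have "sp (axis m 1) v = (\<Sum>j\<in>UNIV. dlt m j * v $ j)"
    by (simp add: sp_def axis_one_nth)
  then show ?thesis by (simp only: sum_dlt_mult)
qed

lemma trace_mult_outer_axis: "trace (M ** outer w (axis m 1)) = (M *v w) $ m"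
  by (simp add: trace_def mult_outer_nth axis_one_nth mult.commute sum_dlt_mult)

lemma trace_mult_axis_outer: "trace (M ** outer (axis m 1) v) = (v v* M) $ m"
  by (simp add: trace_def mult_outer_nth matrix_vector_mult_axis vector_matrix_mult_def mult.commute)

lemmas outer_axis_simps = mult_outer_nth outer_mult_nth outer_nth outer_mult_vector_nth
  vector_mult_outer_nth sp_axis_right sp_axis_left axis_one_nth matrix_vector_mult_axis
  vector_matrix_mult_axis

lemma Pm_outer: "Pm q b = mat 1 + outer (Wv q b) (Vv q b)"
  by (simp add: Pm_def outer_def)

lemma Sq_Pm: "Sq (Pm q b) = 1 + Sq (outer (Wv q b) (Vv q b))"
  by (simp add: Pm_outer Sq_simps)

text \<open>Every bracket carries a factor 1/2, so brackets are handled in doubled form.\<close>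

lemma mat_bracket_Sm_eqI:
  fixes G :: "nat \<Rightarrow> 'n::finite sqmat"
  assumes base: "Sq (mat_bracket d Zm x q) + Sq (mat_bracket d Zm x q) = G 0"
    and step: "\<And>b. Suc b \<le> d \<Longrightarrow>
      (Sq (mat_bracket d (\<lambda>q. Pm q (Suc b)) x q) + Sq (mat_bracket d (\<lambda>q. Pm q (Suc b)) x q)) * Sq (Sm q b)
        + Sq (Pm q (Suc b)) * G b = G (Suc b)"
    and "b \<le> d"
  shows "Sq (mat_bracket d (\<lambda>q. Sm q b) x q) + Sq (mat_bracket d (\<lambda>q. Sm q b) x q) = G b"
  using \<open>b \<le> d\<close>
proof (induction b)
  case 0
  then show ?case using base by simp
next
  case (Suc b)
  let ?BP = "Sq (mat_bracket d (\<lambda>q. Pm q (Suc b)) x q)"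
  let ?BS = "Sq (mat_bracket d (\<lambda>q. Sm q b) x q)"
  have "Sq (mat_bracket d (\<lambda>q. Sm q (Suc b)) x q) = ?BP * Sq (Sm q b) + Sq (Pm q (Suc b)) * ?BS"
    by (simp only: mat_bracket_Sm_Suc Sq_simps)
  then have "Sq (mat_bracket d (\<lambda>q. Sm q (Suc b)) x q) + Sq (mat_bracket d (\<lambda>q. Sm q (Suc b)) x q)
      = (?BP + ?BP) * Sq (Sm q b) + Sq (Pm q (Suc b)) * (?BS + ?BS)"
    by (simp add: algebra_simps)
  then show ?case using Suc step[of b] by simp
qed

lemma mat_bracket_Zm_XC:
  "Sq (mat_bracket d Zm (XC k l) q) + Sq (mat_bracket d Zm (XC k l) q) =
   - (Sq (Zm q) * Sq (Xm q) * Sq (unit_mat l k) + Sq (unit_mat l k) * Sq (Xm q) * Sq (Zm q)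
      + Sq (Zm q) * Sq (unit_mat l k) * Sq (Xm q) - Sq (Xm q) * Sq (unit_mat l k) * Sq (Zm q))"
proof -
  have "mat_bracket d Zm (XC k l) q + mat_bracket d Zm (XC k l) q =
     - ((Zm q ** Xm q) ** unit_mat l k + unit_mat l k ** (Xm q ** Zm q)
        + Zm q ** (unit_mat l k ** Xm q) - Xm q ** (unit_mat l k ** Zm q))"
    by (simp add: vec_eq_iff mat_bracket_Zm unit_mat_right unit_mat_left unit_mat_middle Let_def field_simps)
  from arg_cong[OF this, of Sq, unfolded Sq_simps] show ?thesis by (simp add: algebra_simps)
qed

lemma mat_bracket_Pm_XC:
  fixes q :: "'n::finite pt" and k l :: 'n
  assumes "b \<in> {1..d}"
  defines "N \<equiv> Sq (outer (Wv q b) (Vv q b))" and "U \<equiv> Sq (unit_mat l k)"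
  shows "Sq (mat_bracket d (\<lambda>q. Pm q b) (XC k l) q) + Sq (mat_bracket d (\<lambda>q. Pm q b) (XC k l) q) =
    - (U * Sq (Xm q) * N - Sq (Xm q) * U * N + N * Sq (Xm q) * U - N * U * Sq (Xm q))"
proof -
  have "mat_bracket d (\<lambda>q. Pm q b) (XC k l) q + mat_bracket d (\<lambda>q. Pm q b) (XC k l) q =
     - (unit_mat l k ** (Xm q ** outer (Wv q b) (Vv q b)) - Xm q ** (unit_mat l k ** outer (Wv q b) (Vv q b))
        + (outer (Wv q b) (Vv q b) ** Xm q) ** unit_mat l k - outer (Wv q b) (Vv q b) ** (unit_mat l k ** Xm q))"
    using assms(1)
    by (simp add: vec_eq_iff mat_bracket_Pm unit_mat_right unit_mat_left unit_mat_middle outer_axis_simps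
        brUW_def brUV_def Vv_def Wv_def field_simps)
  from arg_cong[OF this, of Sq, unfolded Sq_simps] show ?thesis
    unfolding N_def U_def by (simp add: algebra_simps)
qed

lemma mat_bracket_Sm_XC:
  fixes q :: "'n::finite pt" and k l :: 'n
  assumes "b \<le> d"
  defines "S \<equiv> \<lambda>b. Sq (Sm q b)" and "U \<equiv> Sq (unit_mat l k)" and "X \<equiv> Sq (Xm q)"
  shows "Sq (mat_bracket d (\<lambda>q. Sm q b) (XC k l) q) + Sq (mat_bracket d (\<lambda>q. Sm q b) (XC k l) q) =
    - (S b * X * U + U * X * S b + S b * U * X - X * U * S b)"
proof (rule mat_bracket_Sm_eqI[OF _ _ assms(1)])
  show "Sq (mat_bracket d Zm (XC k l) q) + Sq (mat_bracket d Zm (XC k l) q) =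
      - (S 0 * X * U + U * X * S 0 + S 0 * U * X - X * U * S 0)"
    unfolding S_def U_def X_def by (simp add: mat_bracket_Zm_XC)
  fix b assume "Suc b \<le> d"
  then show "(Sq (mat_bracket d (\<lambda>q. Pm q (Suc b)) (XC k l) q) + Sq (mat_bracket d (\<lambda>q. Pm q (Suc b)) (XC k l) q))
      * Sq (Sm q b) + Sq (Pm q (Suc b)) * - (S b * X * U + U * X * S b + S b * U * X - X * U * S b)
    = - (S (Suc b) * X * U + U * X * S (Suc b) + S (Suc b) * U * X - X * U * S (Suc b))"
    unfolding S_def U_def X_def by (simp add: mat_bracket_Pm_XC Sq_simps Sq_Pm algebra_simps)
qed

lemma mat_bracket_Zm_ZC:
  "Sq (mat_bracket d Zm (ZC k l) q) + Sq (mat_bracket d Zm (ZC k l) q) =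
   Sq (Zm q) * Sq (Zm q) * Sq (unit_mat l k) - Sq (unit_mat l k) * Sq (Zm q) * Sq (Zm q)"
proof -
  have "mat_bracket d Zm (ZC k l) q + mat_bracket d Zm (ZC k l) q =
     (Zm q ** Zm q) ** unit_mat l k - unit_mat l k ** (Zm q ** Zm q)"
    by (simp add: vec_eq_iff mat_bracket_Zm unit_mat_right unit_mat_left Let_def field_simps)
  from arg_cong[OF this, of Sq, unfolded Sq_simps] show ?thesis by (simp add: algebra_simps)
qed

lemma mat_bracket_Pm_ZC:
  fixes q :: "'n::finite pt" and k l :: 'n
  assumes "b \<in> {1..d}"
  defines "N \<equiv> Sq (outer (Wv q b) (Vv q b))" and "U \<equiv> Sq (unit_mat l k)"
  shows "Sq (mat_bracket d (\<lambda>q. Pm q b) (ZC k l) q) + Sq (mat_bracket d (\<lambda>q. Pm q b) (ZC k l) q) =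
    - (U * Sq (Zm q) * N - Sq (Zm q) * U * N + N * Sq (Zm q) * U - N * U * Sq (Zm q))"
proof -
  have "mat_bracket d (\<lambda>q. Pm q b) (ZC k l) q + mat_bracket d (\<lambda>q. Pm q b) (ZC k l) q =
     - (unit_mat l k ** (Zm q ** outer (Wv q b) (Vv q b)) - Zm q ** (unit_mat l k ** outer (Wv q b) (Vv q b))
        + (outer (Wv q b) (Vv q b) ** Zm q) ** unit_mat l k - outer (Wv q b) (Vv q b) ** (unit_mat l k ** Zm q))"
    using assms(1)
    by (simp add: vec_eq_iff mat_bracket_Pm unit_mat_right unit_mat_left unit_mat_middle outer_axis_simps
        brUW_def brUV_def Vv_def Wv_def field_simps)
  from arg_cong[OF this, of Sq, unfolded Sq_simps] show ?thesis
    unfolding N_def U_def by (simp add: algebra_simps)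
qed

lemma mat_bracket_Sm_ZC:
  fixes q :: "'n::finite pt" and k l :: 'n
  assumes "b \<le> d"
  defines "S \<equiv> \<lambda>b. Sq (Sm q b)" and "U \<equiv> Sq (unit_mat l k)" and "Z \<equiv> Sq (Zm q)"
  shows "Sq (mat_bracket d (\<lambda>q. Sm q b) (ZC k l) q) + Sq (mat_bracket d (\<lambda>q. Sm q b) (ZC k l) q) =
    S b * Z * U - U * Z * S b + Z * U * S b - S b * U * Z"
proof (rule mat_bracket_Sm_eqI[OF _ _ assms(1)])
  show "Sq (mat_bracket d Zm (ZC k l) q) + Sq (mat_bracket d Zm (ZC k l) q) =
      S 0 * Z * U - U * Z * S 0 + Z * U * S 0 - S 0 * U * Z"
    unfolding S_def U_def Z_def by (simp add: mat_bracket_Zm_ZC)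
  fix b assume "Suc b \<le> d"
  then show "(Sq (mat_bracket d (\<lambda>q. Pm q (Suc b)) (ZC k l) q) + Sq (mat_bracket d (\<lambda>q. Pm q (Suc b)) (ZC k l) q))
      * Sq (Sm q b) + Sq (Pm q (Suc b)) * (S b * Z * U - U * Z * S b + Z * U * S b - S b * U * Z)
    = S (Suc b) * Z * U - U * Z * S (Suc b) + Z * U * S (Suc b) - S (Suc b) * U * Z"
    unfolding S_def U_def Z_def by (simp add: mat_bracket_Pm_ZC Sq_simps Sq_Pm algebra_simps)
qed

lemma mat_bracket_Zm_WC:
  "Sq (mat_bracket d Zm (WC c m) q) + Sq (mat_bracket d Zm (WC c m) q) =
   Sq (Zm q) * Sq (outer (Wv q c) (axis m 1)) - Sq (outer (Wv q c) (axis m 1)) * Sq (Zm q)"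
proof -
  have "mat_bracket d Zm (WC c m) q + mat_bracket d Zm (WC c m) q =
     Zm q ** outer (Wv q c) (axis m 1) - outer (Wv q c) (axis m 1) ** Zm q"
    by (simp add: vec_eq_iff mat_bracket_Zm outer_axis_simps brUW_def field_simps)
  from arg_cong[OF this, of Sq, unfolded Sq_simps] show ?thesis by simp
qed

lemma mat_bracket_Pm_WC_less:
  assumes "b \<in> {1..d}" and "b < c"
  shows "Sq (mat_bracket d (\<lambda>q. Pm q b) (WC c m) q) + Sq (mat_bracket d (\<lambda>q. Pm q b) (WC c m) q) =
    Sq (outer (Wv q b) (Vv q b)) * Sq (outer (Wv q c) (axis m 1)) - Sq (outer (Wv q c) (axis m 1)) * Sq (outer (Wv q b) (Vv q b))"
proof -
  have "mat_bracket d (\<lambda>q. Pm q b) (WC c m) q + mat_bracket d (\<lambda>q. Pm q b) (WC c m) q =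
    outer (Wv q b) (Vv q b) ** outer (Wv q c) (axis m 1) - outer (Wv q c) (axis m 1) ** outer (Wv q b) (Vv q b)"
    using assms by (simp add: vec_eq_iff mat_bracket_Pm outer_axis_simps osgn_def dlt_def Vv_def Wv_def field_simps)
  from arg_cong[OF this, of Sq, unfolded Sq_simps] show ?thesis by simp
qed

lemma mat_bracket_Pm_WC_greater:
  assumes "b \<in> {1..d}" and "c < b"
  shows "Sq (mat_bracket d (\<lambda>q. Pm q b) (WC c m) q) + Sq (mat_bracket d (\<lambda>q. Pm q b) (WC c m) q) =
    Sq (outer (Wv q c) (axis m 1)) * Sq (outer (Wv q b) (Vv q b)) - Sq (outer (Wv q b) (Vv q b)) * Sq (outer (Wv q c) (axis m 1))"
proof -
  have "mat_bracket d (\<lambda>q. Pm q b) (WC c m) q + mat_bracket d (\<lambda>q. Pm q b) (WC c m) q =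
    outer (Wv q c) (axis m 1) ** outer (Wv q b) (Vv q b) - outer (Wv q b) (Vv q b) ** outer (Wv q c) (axis m 1)"
    using assms by (simp add: vec_eq_iff mat_bracket_Pm outer_axis_simps osgn_def dlt_def Vv_def Wv_def field_simps)
  from arg_cong[OF this, of Sq, unfolded Sq_simps] show ?thesis by simp
qed

lemma mat_bracket_Pm_WC_eq:
  assumes "b \<in> {1..d}"
  shows "Sq (mat_bracket d (\<lambda>q. Pm q b) (WC b m) q) + Sq (mat_bracket d (\<lambda>q. Pm q b) (WC b m) q) =
    Sq (outer (Wv q b) (axis m 1)) + Sq (outer (Wv q b) (axis m 1)) + Sq (outer (Wv q b) (axis m 1)) * Sq (outer (Wv q b) (Vv q b)) + Sq (outer (Wv q b) (Vv q b)) * Sq (outer (Wv q b) (axis m 1))"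
proof -
  have "mat_bracket d (\<lambda>q. Pm q b) (WC b m) q + mat_bracket d (\<lambda>q. Pm q b) (WC b m) q =
    outer (Wv q b) (axis m 1) + outer (Wv q b) (axis m 1) + outer (Wv q b) (axis m 1) ** outer (Wv q b) (Vv q b) + outer (Wv q b) (Vv q b) ** outer (Wv q b) (axis m 1)"
    using assms by (simp add: vec_eq_iff mat_bracket_Pm outer_axis_simps osgn_def dlt_def Vv_def Wv_def field_simps)
  from arg_cong[OF this, of Sq, unfolded Sq_simps] show ?thesis by simp
qed

lemma mat_bracket_Sm_WC:
  fixes q :: "'n::finite pt" and m :: 'n
  assumes "c \<in> {1..d}" and "b \<le> d"
  defines "S \<equiv> \<lambda>b. Sq (Sm q b)" and "Q \<equiv> Sq (outer (Wv q c) (axis m 1))"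
  shows "Sq (mat_bracket d (\<lambda>q. Sm q b) (WC c m) q) + Sq (mat_bracket d (\<lambda>q. Sm q b) (WC c m) q) =
    (if b < c then S b * Q - Q * S b else Q * S b + S b * Q)"
proof (rule mat_bracket_Sm_eqI[OF _ _ assms(2)])
  show "Sq (mat_bracket d Zm (WC c m) q) + Sq (mat_bracket d Zm (WC c m) q) =
      (if 0 < c then S 0 * Q - Q * S 0 else Q * S 0 + S 0 * Q)"
    using assms(1) unfolding S_def Q_def by (simp add: mat_bracket_Zm_WC)
  fix b assume "Suc b \<le> d"
  then have b: "Suc b \<in> {1..d}" by simp
  let ?N = "Sq (outer (Wv q (Suc b)) (Vv q (Suc b)))"
  have S_Suc: "Sq (Sm q (Suc b)) = (1 + ?N) * Sq (Sm q b)" by (simp add: Sq_simps Sq_Pm)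
  show "(Sq (mat_bracket d (\<lambda>q. Pm q (Suc b)) (WC c m) q) + Sq (mat_bracket d (\<lambda>q. Pm q (Suc b)) (WC c m) q))
      * Sq (Sm q b) + Sq (Pm q (Suc b)) * (if b < c then S b * Q - Q * S b else Q * S b + S b * Q)
    = (if Suc b < c then S (Suc b) * Q - Q * S (Suc b) else Q * S (Suc b) + S (Suc b) * Q)"
  proof (cases rule: linorder_cases[of "Suc b" c])
    case less
    then show ?thesis unfolding S_def Q_def S_Suc
      by (simp add: mat_bracket_Pm_WC_less[OF b] Sq_Pm algebra_simps)
  next
    case equal
    then show ?thesis unfolding S_def Q_def S_Suc
      by (simp add: mat_bracket_Pm_WC_eq[OF b, of m] Sq_Pm algebra_simps flip: equal)
  next
    case greater
    then show ?thesis unfolding S_def Q_def S_Suc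
      by (simp add: mat_bracket_Pm_WC_greater[OF b] Sq_Pm algebra_simps)
  qed
qed

lemma mat_bracket_Zm_VC:
  "Sq (mat_bracket d Zm (VC c m) q) + Sq (mat_bracket d Zm (VC c m) q) =
   Sq (outer (axis m 1) (Vv q c)) * Sq (Zm q) - Sq (Zm q) * Sq (outer (axis m 1) (Vv q c))"
proof -
  have "mat_bracket d Zm (VC c m) q + mat_bracket d Zm (VC c m) q =
     outer (axis m 1) (Vv q c) ** Zm q - Zm q ** outer (axis m 1) (Vv q c)"
    by (simp add: vec_eq_iff mat_bracket_Zm outer_axis_simps brUV_def field_simps dlt_commute)
  from arg_cong[OF this, of Sq, unfolded Sq_simps] show ?thesis by simp
qed

lemma mat_bracket_Pm_VC_less:
  assumes "b \<in> {1..d}" and "b < c"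
  shows "Sq (mat_bracket d (\<lambda>q. Pm q b) (VC c m) q) + Sq (mat_bracket d (\<lambda>q. Pm q b) (VC c m) q) =
    Sq (outer (axis m 1) (Vv q c)) * Sq (outer (Wv q b) (Vv q b)) - Sq (outer (Wv q b) (Vv q b)) * Sq (outer (axis m 1) (Vv q c))"
proof -
  have "mat_bracket d (\<lambda>q. Pm q b) (VC c m) q + mat_bracket d (\<lambda>q. Pm q b) (VC c m) q =
    outer (axis m 1) (Vv q c) ** outer (Wv q b) (Vv q b) - outer (Wv q b) (Vv q b) ** outer (axis m 1) (Vv q c)"
    using assms by (simp add: vec_eq_iff mat_bracket_Pm outer_axis_simps osgn_def dlt_def Vv_def Wv_def field_simps)
  from arg_cong[OF this, of Sq, unfolded Sq_simps] show ?thesis by simp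
qed

lemma mat_bracket_Pm_VC_greater:
  assumes "b \<in> {1..d}" and "c < b"
  shows "Sq (mat_bracket d (\<lambda>q. Pm q b) (VC c m) q) + Sq (mat_bracket d (\<lambda>q. Pm q b) (VC c m) q) =
    Sq (outer (Wv q b) (Vv q b)) * Sq (outer (axis m 1) (Vv q c)) - Sq (outer (axis m 1) (Vv q c)) * Sq (outer (Wv q b) (Vv q b))"
proof -
  have "mat_bracket d (\<lambda>q. Pm q b) (VC c m) q + mat_bracket d (\<lambda>q. Pm q b) (VC c m) q =
    outer (Wv q b) (Vv q b) ** outer (axis m 1) (Vv q c) - outer (axis m 1) (Vv q c) ** outer (Wv q b) (Vv q b)"
    using assms by (simp add: vec_eq_iff mat_bracket_Pm outer_axis_simps osgn_def dlt_def Vv_def Wv_def field_simps)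
  from arg_cong[OF this, of Sq, unfolded Sq_simps] show ?thesis by simp
qed

lemma mat_bracket_Pm_VC_eq:
  assumes "b \<in> {1..d}"
  shows "Sq (mat_bracket d (\<lambda>q. Pm q b) (VC b m) q) + Sq (mat_bracket d (\<lambda>q. Pm q b) (VC b m) q) =
    - (Sq (outer (axis m 1) (Vv q b)) + Sq (outer (axis m 1) (Vv q b)) + Sq (outer (Wv q b) (Vv q b)) * Sq (outer (axis m 1) (Vv q b)) + Sq (outer (axis m 1) (Vv q b)) * Sq (outer (Wv q b) (Vv q b)))"
proof -
  have "mat_bracket d (\<lambda>q. Pm q b) (VC b m) q + mat_bracket d (\<lambda>q. Pm q b) (VC b m) q =
    - (outer (axis m 1) (Vv q b) + outer (axis m 1) (Vv q b) + outer (Wv q b) (Vv q b) ** outer (axis m 1) (Vv q b) + outer (axis m 1) (Vv q b) ** outer (Wv q b) (Vv q b))"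
    using assms by (simp add: vec_eq_iff mat_bracket_Pm outer_axis_simps osgn_def dlt_def Vv_def Wv_def field_simps)
  from arg_cong[OF this, of Sq, unfolded Sq_simps] show ?thesis by simp
qed

lemma mat_bracket_Sm_VC:
  fixes q :: "'n::finite pt" and m :: 'n
  assumes "c \<in> {1..d}" and "b \<le> d"
  defines "S \<equiv> \<lambda>b. Sq (Sm q b)" and "R \<equiv> Sq (outer (axis m 1) (Vv q c))"
  shows "Sq (mat_bracket d (\<lambda>q. Sm q b) (VC c m) q) + Sq (mat_bracket d (\<lambda>q. Sm q b) (VC c m) q) =
    (if b < c then R * S b - S b * R else - (R * S b + S b * R))"
proof (rule mat_bracket_Sm_eqI[OF _ _ assms(2)])
  show "Sq (mat_bracket d Zm (VC c m) q) + Sq (mat_bracket d Zm (VC c m) q) =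
      (if 0 < c then R * S 0 - S 0 * R else - (R * S 0 + S 0 * R))"
    using assms(1) unfolding S_def R_def by (simp add: mat_bracket_Zm_VC)
  fix b assume "Suc b \<le> d"
  then have b: "Suc b \<in> {1..d}" by simp
  let ?N = "Sq (outer (Wv q (Suc b)) (Vv q (Suc b)))"
  have S_Suc: "Sq (Sm q (Suc b)) = (1 + ?N) * Sq (Sm q b)" by (simp add: Sq_simps Sq_Pm)
  show "(Sq (mat_bracket d (\<lambda>q. Pm q (Suc b)) (VC c m) q) + Sq (mat_bracket d (\<lambda>q. Pm q (Suc b)) (VC c m) q))
      * Sq (Sm q b) + Sq (Pm q (Suc b)) * (if b < c then R * S b - S b * R else - (R * S b + S b * R))
    = (if Suc b < c then R * S (Suc b) - S (Suc b) * R else - (R * S (Suc b) + S (Suc b) * R))"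
  proof (cases rule: linorder_cases[of "Suc b" c])
    case less
    then show ?thesis unfolding S_def R_def S_Suc
      by (simp add: mat_bracket_Pm_VC_less[OF b] Sq_Pm algebra_simps)
  next
    case equal
    then show ?thesis unfolding S_def R_def S_Suc
      by (simp add: mat_bracket_Pm_VC_eq[OF b, of m] Sq_Pm algebra_simps flip: equal)
  next
    case greater
    then show ?thesis unfolding S_def R_def S_Suc
      by (simp add: mat_bracket_Pm_VC_greater[OF b] Sq_Pm algebra_simps)
  qed
qed

lemma tr_power_mult_right: "tr (s^n * (x * s)) = tr (s^Suc n * x)"
  using tr_commute[of "s^n * x" s] by (simp add: mult.assoc power_commutes power_mult_left_commute)

lemma tr_power_mult_left: "tr (s^n * (s * x)) = tr (s^Suc n * x)"
  by (simp add: mult.assoc power_mult_left_commute)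

lemma tr_power_XC_form:
  fixes s x u :: "'n::finite sqmat"
  shows "tr (s^m * (- (s * x * u + u * x * s + s * u * x - x * u * s)))
       = - (tr (x * s^Suc m * u) + tr (x * s^Suc m * u))"
proof -
  have "tr (s^m * (s * x * u)) = tr (x * u * s^Suc m)"
    using tr_commute[of "s^Suc m" "x * u"] by (simp add: mult.assoc power_mult_left_commute)
  moreover have "tr (s^m * (u * x * s)) = tr (x * s^Suc m * u)"
    using tr_power_mult_right[of s m "u * x"] tr_rotate3[of "s^Suc m" u x] by (simp add: mult.assoc)
  moreover have "tr (s^m * (s * u * x)) = tr (x * s^Suc m * u)"
    using tr_commute[of "s^Suc m * u" x] by (simp add: mult.assoc power_mult_left_commute)
  moreover have "tr (s^m * (x * u * s)) = tr (x * u * s^Suc m)"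
    using tr_power_mult_right[of s m "x * u"] tr_commute[of "s^Suc m" "x * u"] by (simp add: mult.assoc)
  ultimately show ?thesis by (simp add: algebra_simps tr_add tr_diff tr_uminus)
qed

lemma tr_power_ZC_form:
  fixes s z u :: "'n::finite sqmat"
  shows "tr (s^m * (s * z * u - u * z * s + z * u * s - s * u * z))
       = (tr (s^Suc m * z * u) - tr (z * s^Suc m * u)) + (tr (s^Suc m * z * u) - tr (z * s^Suc m * u))"
proof -
  have "tr (s^m * (s * z * u)) = tr (s^Suc m * z * u)"
    by (simp add: mult.assoc power_mult_left_commute)
  moreover have "tr (s^m * (u * z * s)) = tr (z * s^Suc m * u)"
    using tr_power_mult_right[of s m "u * z"] tr_rotate3[of "s^Suc m" u z] by (simp add: mult.assoc)
  moreover have "tr (s^m * (z * u * s)) = tr (s^Suc m * z * u)"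
    using tr_power_mult_right[of s m "z * u"] by (simp add: mult.assoc)
  moreover have "tr (s^m * (s * u * z)) = tr (z * s^Suc m * u)"
    using tr_commute[of "s^Suc m * u" z] by (simp add: mult.assoc power_mult_left_commute)
  ultimately show ?thesis by (simp add: algebra_simps tr_add tr_diff tr_uminus)
qed

lemma hvf_Ham_XC:
  assumes "k = Suc n" and "a \<le> d"
  shows "hvf d (Ham a k) (XC i j) q = - (Xm q ** mpow (Sm q a) k) $ i $ j"
proof -
  have "hvf d (Ham a k) (XC i j) q + hvf d (Ham a k) (XC i j) q
     = - (tr (Sq (Xm q) * Sq (Sm q a)^Suc n * Sq (unit_mat j i))
          + tr (Sq (Xm q) * Sq (Sm q a)^Suc n * Sq (unit_mat j i)))"
    unfolding hvf_Ham_double[OF assms(1)] mat_bracket_Sm_XC[OF assms(2)]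
    by (rule tr_power_XC_form)
  moreover have "tr (Sq (Xm q) * Sq (Sm q a)^Suc n * Sq (unit_mat j i)) = (Xm q ** mpow (Sm q a) k) $ i $ j"
    by (simp only: assms(1) Sq_mpow[symmetric] Sq_mult[symmetric] tr_Sq trace_mult_unit_mat)
  ultimately show ?thesis by simp
qed

lemma hvf_Ham_ZC:
  assumes "k = Suc n" and "a \<le> d"
  shows "hvf d (Ham a k) (ZC i j) q = (mpow (Sm q a) k ** Zm q - Zm q ** mpow (Sm q a) k) $ i $ j"
proof -
  have "hvf d (Ham a k) (ZC i j) q + hvf d (Ham a k) (ZC i j) q
     = (tr (Sq (Sm q a)^Suc n * Sq (Zm q) * Sq (unit_mat j i)) - tr (Sq (Zm q) * Sq (Sm q a)^Suc n * Sq (unit_mat j i)))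
     + (tr (Sq (Sm q a)^Suc n * Sq (Zm q) * Sq (unit_mat j i)) - tr (Sq (Zm q) * Sq (Sm q a)^Suc n * Sq (unit_mat j i)))"
    unfolding hvf_Ham_double[OF assms(1)] mat_bracket_Sm_ZC[OF assms(2)]
    by (rule tr_power_ZC_form)
  moreover have "tr (Sq (Sm q a)^Suc n * Sq (Zm q) * Sq (unit_mat j i)) = (mpow (Sm q a) k ** Zm q) $ i $ j"
    by (simp only: assms(1) Sq_mpow[symmetric] Sq_mult[symmetric] tr_Sq trace_mult_unit_mat)
  moreover have "tr (Sq (Zm q) * Sq (Sm q a)^Suc n * Sq (unit_mat j i)) = (Zm q ** mpow (Sm q a) k) $ i $ j"
    by (simp only: assms(1) Sq_mpow[symmetric] Sq_mult[symmetric] tr_Sq trace_mult_unit_mat)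
  ultimately have "2 * hvf d (Ham a k) (ZC i j) q = 2 * (mpow (Sm q a) k ** Zm q - Zm q ** mpow (Sm q a) k) $ i $ j"
    by (simp add: right_diff_distrib)
  then show ?thesis by (metis mult_cancel_left zero_neq_numeral)
qed

lemma hvf_Ham_WC:
  assumes "k = Suc n" and "a \<le> d" and "c \<in> {1..d}"
  shows "hvf d (Ham a k) (WC c m) q = (if c \<le> a then (mpow (Sm q a) k *v Wv q c) $ m else 0)"
proof -
  let ?s = "Sq (Sm q a)" and ?Q = "Sq (outer (Wv q c) (axis m 1))"
  have tr_Q: "tr (?s^k * ?Q) = (mpow (Sm q a) k *v Wv q c) $ m"
    by (simp only: Sq_mpow[symmetric] Sq_mult[symmetric] tr_Sq trace_mult_outer_axis)
  have "hvf d (Ham a k) (WC c m) q + hvf d (Ham a k) (WC c m) q =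
    tr (?s^n * (if a < c then ?s * ?Q - ?Q * ?s else ?Q * ?s + ?s * ?Q))"
    unfolding hvf_Ham_double[OF assms(1)] mat_bracket_Sm_WC[OF assms(3,2)] ..
  then show ?thesis
    by (auto simp: right_diff_distrib distrib_left tr_diff tr_add tr_power_mult_right
        tr_power_mult_left assms(1)[symmetric] tr_Q split: if_splits)
qed

lemma hvf_Ham_VC:
  assumes "k = Suc n" and "a \<le> d" and "c \<in> {1..d}"
  shows "hvf d (Ham a k) (VC c m) q = (if c \<le> a then - (Vv q c v* mpow (Sm q a) k) $ m else 0)"
proof -
  let ?s = "Sq (Sm q a)" and ?R = "Sq (outer (axis m 1) (Vv q c))"
  have tr_R: "tr (?s^k * ?R) = (Vv q c v* mpow (Sm q a) k) $ m"
    by (simp only: Sq_mpow[symmetric] Sq_mult[symmetric] tr_Sq trace_mult_axis_outer)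
  have "hvf d (Ham a k) (VC c m) q + hvf d (Ham a k) (VC c m) q =
    tr (?s^n * (if a < c then ?R * ?s - ?s * ?R else - (?R * ?s + ?s * ?R)))"
    unfolding hvf_Ham_double[OF assms(1)] mat_bracket_Sm_VC[OF assms(3,2)] ..
  then show ?thesis
    by (auto simp: right_diff_distrib distrib_left tr_diff tr_add tr_uminus tr_power_mult_right
        tr_power_mult_left assms(1)[symmetric] tr_R split: if_splits)
qed

section \<open>The flow\<close>

lemma matrix_inv_right: "invertible (A::complex^'n::finite^'n) \<Longrightarrow> A ** matrix_inv A = mat 1"
  and matrix_inv_left: "invertible (A::complex^'n::finite^'n) \<Longrightarrow> matrix_inv A ** A = mat 1"
  unfolding invertible_def matrix_inv_def by (metis (mono_tags, lifting) someI_ex)+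

lemma invertibleI_right_inverse: "(A::complex^'n::finite^'n) ** B = mat 1 \<Longrightarrow> invertible A"
  using matrix_left_right_inverse unfolding invertible_def by blast

lemma matrix_inv_eqI:
  fixes A :: "complex^'n::finite^'n"
  assumes "A ** B = mat 1"
  shows "matrix_inv A = B"
proof -
  have "matrix_inv A = matrix_inv A ** (A ** B)" by (simp add: assms)
  also have "\<dots> = B"
    by (simp add: matrix_mul_assoc matrix_inv_left[OF invertibleI_right_inverse[OF assms]])
  finally show ?thesis .
qed

lemma commute_matrix_inv:
  fixes A S :: "complex^'n::finite^'n"
  assumes "A ** S = S ** A" and "invertible S"
  shows "A ** matrix_inv S = matrix_inv S ** A"
proof -
  have "A ** matrix_inv S = matrix_inv S ** (S ** A) ** matrix_inv S"
    by (simp add: matrix_mul_assoc matrix_inv_left[OF assms(2)])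
  also have "\<dots> = matrix_inv S ** A"
    by (simp add: assms(1)[symmetric] matrix_mul_assoc[symmetric] matrix_inv_right[OF assms(2)])
  finally show ?thesis .
qed

lemma Sm_mult_inverse:
  assumes "invertible (Zm p)"
  shows "\<forall>c\<in>{1..b}. invertible (Pm p c) \<Longrightarrow> Sm p b ** (matrix_inv (Zm p) ** invprod p b) = mat 1"
proof (induction b)
  case 0 then show ?case using matrix_inv_right[OF assms] by simp
next
  case (Suc b)
  then have "invertible (Pm p (Suc b))" by simp
  have "Sm p (Suc b) ** (matrix_inv (Zm p) ** invprod p (Suc b))
     = Pm p (Suc b) ** (Sm p b ** (matrix_inv (Zm p) ** invprod p b)) ** matrix_inv (Pm p (Suc b))"
    by (simp add: matrix_mul_assoc)
  also have "\<dots> = mat 1"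
    using Suc matrix_inv_right[OF \<open>invertible (Pm p (Suc b))\<close>] by simp
  finally show ?case .
qed

lemma has_field_derivative_vector_matrix_mult:
  assumes "has_matrix_derivative G G' t"
  shows "((\<lambda>s. (v v* G s) $ j) has_field_derivative (v v* G') $ j) (at t)"
proof -
  have "((\<lambda>s. \<Sum>i\<in>UNIV. v $ i * G s $ i $ j) has_field_derivative (\<Sum>i\<in>UNIV. v $ i * G' $ i $ j)) (at t)"
    using assms unfolding has_matrix_derivative_def by (intro DERIV_sum DERIV_cmult) auto
  then show ?thesis by (simp add: vector_matrix_mult_def)
qed

lemma has_field_derivative_matrix_vector_mult:
  assumes "has_matrix_derivative G G' t"
  shows "((\<lambda>s. (G s *v w) $ i) has_field_derivative (G' *v w) $ i) (at t)"
proof -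
  have "((\<lambda>s. \<Sum>j\<in>UNIV. G s $ i $ j * w $ j) has_field_derivative (\<Sum>j\<in>UNIV. G' $ i $ j * w $ j)) (at t)"
    using assms unfolding has_matrix_derivative_def by (intro DERIV_sum DERIV_cmult_right) auto
  then show ?thesis by (simp add: matrix_vector_mult_def)
qed

lemma vector_matrix_mult_uminus: "(v::'a::ring_1^'m) v* (- M) = - (v v* (M::'a^'n::finite^'m::finite))"
  by (simp add: vec_eq_iff vector_matrix_mult_def sum_negf)

lemma claimed_flow_XC: "claimed_flow a k p s (XC i j) = (Xm p ** mexp (msc (-s) (mpow (Sm p a) k))) $ i $ j"
  and claimed_flow_ZC: "claimed_flow a k p s (ZC i j) =
    (mexp (msc s (mpow (Sm p a) k)) ** Zm p ** mexp (msc (-s) (mpow (Sm p a) k))) $ i $ j"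
  and claimed_flow_VC: "claimed_flow a k p s (VC b j) =
    (if b \<le> a then (Vv p b v* mexp (msc (-s) (mpow (Sm p a) k))) $ j else p (VC b j))"
  and claimed_flow_WC: "claimed_flow a k p s (WC b j) =
    (if b \<le> a then (mexp (msc s (mpow (Sm p a) k)) *v Wv p b) $ j else p (WC b j))"
  by (simp_all add: claimed_flow_def Let_def)

lemma claimed_flow_0: "claimed_flow a k p 0 = p"
proof
  fix c show "claimed_flow a k p 0 c = p c"
    by (cases c) (simp_all add: claimed_flow_XC claimed_flow_ZC claimed_flow_VC claimed_flow_WC
        mexp_msc_0 Xm_def Zm_def Vv_def Wv_def)
qed

lemma moment_map_prefix:
  assumes "invertible (Zm p)" and "\<forall>c\<in>{1..b}. invertible (Pm p c)"
  shows "Xm p ** Zm p ** matrix_inv (Xm p) ** matrix_inv (Zm p) ** invprod p b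
       = Xm p ** Zm p ** matrix_inv (Xm p) ** matrix_inv (Sm p b)"
  by (simp add: matrix_inv_eqI[OF Sm_mult_inverse[OF assms]] matrix_mul_assoc)

context
  fixes a k :: nat and p :: "'n::finite pt" and t :: complex
begin

definition "Sk = mpow (Sm p a) k"
definition "Et = mexp (msc t Sk)"
definition "Et_inv = mexp (msc (-t) Sk)"
definition "p_t = claimed_flow a k p t"

lemma Et_mult_Et_inv: "Et ** Et_inv = mat 1"
  unfolding Et_def Et_inv_def by (rule mexp_msc_inverse)

lemma Et_inv_mult_Et: "Et_inv ** Et = mat 1"
  unfolding Et_def Et_inv_def using mexp_msc_inverse[of "-t" Sk] by simp

lemma Sq_Et_mult_Et_inv: "Sq Et * Sq Et_inv = 1"
  by (rule Sq_inverse_eq_1[OF Et_mult_Et_inv])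

lemma Sq_Et_inv_mult_Et_cancel: "Sq Et_inv * (Sq Et * y) = y"
  by (simp add: mult.assoc[symmetric] Sq_inverse_eq_1[OF Et_inv_mult_Et])

lemma invertible_Et: "invertible Et"
  by (rule invertibleI_right_inverse[OF Et_mult_Et_inv])

lemma invertible_Et_inv: "invertible Et_inv"
  by (rule invertibleI_right_inverse[OF Et_inv_mult_Et])

lemma Sm_commute_Et: "Sm p a ** Et = Et ** Sm p a"
  unfolding Et_def Sk_def by (rule mexp_msc_commute, rule mpow_commute) simp

lemma Sk_commute_Et: "Sk ** Et = Et ** Sk"
  unfolding Et_def by (rule mexp_msc_commute) simp

lemma Sk_commute_Et_inv: "Sk ** Et_inv = Et_inv ** Sk"
  unfolding Et_inv_def by (rule mexp_msc_commute) simp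

lemma Xm_p_t: "Xm p_t = Xm p ** Et_inv"
  by (simp add: vec_eq_iff Xm_def p_t_def claimed_flow_XC Et_inv_def Sk_def)

lemma Zm_p_t: "Zm p_t = Et ** Zm p ** Et_inv"
  by (simp add: vec_eq_iff Zm_def p_t_def claimed_flow_ZC Et_inv_def Et_def Sk_def)

lemma Vv_p_t: "Vv p_t b = (if b \<le> a then Vv p b v* Et_inv else Vv p b)"
  by (simp add: vec_eq_iff Vv_def p_t_def claimed_flow_VC Et_inv_def Sk_def)

lemma Wv_p_t: "Wv p_t b = (if b \<le> a then Et *v Wv p b else Wv p b)"
  by (simp add: vec_eq_iff Wv_def p_t_def claimed_flow_WC Et_def Sk_def)

lemma Pm_p_t: "Pm p_t b = (if b \<le> a then Et ** Pm p b ** Et_inv else Pm p b)"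
proof (cases "b \<le> a")
  case True
  have "Pm p_t b = mat 1 + Et ** outer (Wv p b) (Vv p b) ** Et_inv"
    using True by (simp add: Pm_outer Vv_p_t Wv_p_t outer_conj)
  also have "\<dots> = Et ** Pm p b ** Et_inv"
    by (rule Sq_eqI) (simp add: Pm_outer Sq_simps algebra_simps Sq_Et_mult_Et_inv)
  finally show ?thesis using True by simp
qed (simp add: Pm_def Vv_p_t Wv_p_t)

lemma Sm_p_t: "b \<le> a \<Longrightarrow> Sm p_t b = Et ** Sm p b ** Et_inv"
proof (induction b)
  case 0 show ?case by (simp add: Zm_p_t)
next
  case (Suc b)
  then have "Sm p_t (Suc b) = (Et ** Pm p (Suc b) ** Et_inv) ** (Et ** Sm p b ** Et_inv)"
    by (simp add: Pm_p_t)
  also have "\<dots> = Et ** Sm p (Suc b) ** Et_inv"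
    by (rule Sq_eqI) (simp add: Sq_simps mult.assoc Sq_Et_inv_mult_Et_cancel)
  finally show ?case .
qed

lemma mpow_conj: "mpow (Et ** M ** Et_inv) m = Et ** mpow M m ** Et_inv"
proof (induction m)
  case 0 show ?case by (simp add: Et_mult_Et_inv)
next
  case (Suc m)
  then show ?case by (simp, intro Sq_eqI) (simp add: Sq_simps mult.assoc Sq_Et_inv_mult_Et_cancel)
qed

lemma Sk_p_t: "mpow (Sm p_t a) k = Sk"
proof -
  have "mpow (Sm p_t a) k = Et ** Sk ** Et_inv" by (simp add: Sm_p_t mpow_conj Sk_def)
  also have "\<dots> = Sk"
    by (rule Sq_eqI) (simp add: Sq_simps Sq_commute[OF Sk_commute_Et, symmetric] mult.assoc
        Sq_Et_mult_Et_inv)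
  finally show ?thesis .
qed

lemma matrix_inv_conj:
  assumes "invertible M"
  shows "matrix_inv (Et ** M ** Et_inv) = Et ** matrix_inv M ** Et_inv"
proof (rule matrix_inv_eqI, rule Sq_eqI)
  have "Sq M * Sq (matrix_inv M) = 1" by (rule Sq_inverse_eq_1[OF matrix_inv_right[OF assms]])
  then show "Sq (Et ** M ** Et_inv ** (Et ** matrix_inv M ** Et_inv)) = Sq (mat 1)"
    by (simp add: Sq_simps mult.assoc Sq_Et_inv_mult_Et_cancel Sq_Et_mult_Et_inv
        flip: mult.assoc[of "Sq M"])
qed

lemma invprod_p_t_extend:
  assumes "W ** invprod p_t a = W' ** invprod p a" and "a \<le> b"
  shows "W ** invprod p_t b = W' ** invprod p b"
  using assms(2)
proof (induction b rule: dec_induct)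
  case base then show ?case by (rule assms(1))
next
  case (step b)
  then have "W ** invprod p_t (Suc b) = (W ** invprod p_t b) ** matrix_inv (Pm p (Suc b))"
    by (simp add: Pm_p_t matrix_mul_assoc)
  then show ?case using step.IH by (simp add: matrix_mul_assoc)
qed

lemma p_t_in_Mx:
  assumes p: "p \<in> Mx d q" and "a \<le> d"
  shows "p_t \<in> Mx d q"
proof -
  have iX: "invertible (Xm p)" and iZ: "invertible (Zm p)" and iP: "\<forall>c\<in>{1..d}. invertible (Pm p c)"
    and eq: "Xm p ** Zm p ** matrix_inv (Xm p) ** matrix_inv (Zm p) ** invprod p d = mat q"
    using p unfolding Mx_def by auto
  have iX': "invertible (Xm p_t)" unfolding Xm_p_t by (intro invertible_mult iX invertible_Et_inv)
  have iZ': "invertible (Zm p_t)" unfolding Zm_p_t by (intro invertible_mult iZ invertible_Et_inv invertible_Et)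
  have iP': "\<forall>c\<in>{1..d}. invertible (Pm p_t c)"
    using iP by (auto simp: Pm_p_t intro!: invertible_mult invertible_Et invertible_Et_inv)
  have iPa: "\<forall>c\<in>{1..a}. invertible (Pm p c)" and iPa': "\<forall>c\<in>{1..a}. invertible (Pm p_t c)"
    using iP iP' \<open>a \<le> d\<close> by auto
  let ?Si = "matrix_inv (Sm p a)"
  have iS: "invertible (Sm p a)"
    by (rule invertibleI_right_inverse[OF Sm_mult_inverse[OF iZ iPa]])
  have inv_S_t: "matrix_inv (Sm p_t a) = Et ** ?Si ** Et_inv"
    by (simp add: Sm_p_t matrix_inv_conj[OF iS])
  have inv_X_t: "matrix_inv (Xm p_t) = Et ** matrix_inv (Xm p)"
  proof (rule matrix_inv_eqI, rule Sq_eqI)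
    have "Sq (Xm p) * Sq (matrix_inv (Xm p)) = 1" by (rule Sq_inverse_eq_1[OF matrix_inv_right[OF iX]])
    then show "Sq (Xm p_t ** (Et ** matrix_inv (Xm p))) = Sq (mat 1)"
      by (simp add: Xm_p_t Sq_simps mult.assoc Sq_Et_inv_mult_Et_cancel)
  qed
  have "Sq Et * (Sq ?Si * Sq Et_inv) = (Sq Et * Sq ?Si) * Sq Et_inv"
    by (simp add: mult.assoc)
  also have "\<dots> = Sq ?Si * (Sq Et * Sq Et_inv)"
    by (simp add: Sq_commute[OF commute_matrix_inv[OF Sm_commute_Et[symmetric] iS]] mult.assoc)
  finally have Et_Si: "Sq Et * (Sq ?Si * Sq Et_inv) = Sq ?Si"
    by (simp add: Sq_Et_mult_Et_inv)
  have "Xm p_t ** Zm p_t ** matrix_inv (Xm p_t) ** matrix_inv (Sm p_t a)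
      = Xm p ** Zm p ** matrix_inv (Xm p) ** ?Si"
    unfolding inv_X_t inv_S_t
    by (rule Sq_eqI) (simp add: Xm_p_t Zm_p_t Sq_simps mult.assoc Sq_Et_inv_mult_Et_cancel Et_Si)
  then have "Xm p_t ** Zm p_t ** matrix_inv (Xm p_t) ** matrix_inv (Zm p_t) ** invprod p_t a
      = Xm p ** Zm p ** matrix_inv (Xm p) ** matrix_inv (Zm p) ** invprod p a"
    by (simp only: moment_map_prefix[OF iZ' iPa'] moment_map_prefix[OF iZ iPa])
  from invprod_p_t_extend[OF this \<open>a \<le> d\<close>] eq iX' iZ' iP' show ?thesis
    unfolding Mx_def by simp
qed

lemma has_matrix_derivative_Et: "has_matrix_derivative (\<lambda>s. mexp (msc s Sk)) (Sk ** Et) t"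
  unfolding Et_def by (rule has_matrix_derivative_mexp)

lemma has_matrix_derivative_Et_inv: "has_matrix_derivative (\<lambda>s. mexp (msc (-s) Sk)) (- (Sk ** Et_inv)) t"
  unfolding Et_inv_def by (rule has_matrix_derivative_mexp_neg)

lemma claimed_flow_has_derivative_XC:
  assumes "k = Suc n" and "a \<le> d"
  shows "((\<lambda>s. claimed_flow a k p s (XC i j)) has_field_derivative hvf d (Ham a k) (XC i j) p_t) (at t)"
proof -
  have "has_matrix_derivative (\<lambda>s. Xm p ** mexp (msc (-s) Sk)) (0 ** Et_inv + Xm p ** (- (Sk ** Et_inv))) t"
    using has_matrix_derivative_mult[OF has_matrix_derivative_const has_matrix_derivative_Et_inv]
    by (simp only: Et_inv_def)
  moreover have "0 ** Et_inv + Xm p ** (- (Sk ** Et_inv)) = - (Xm p_t ** mpow (Sm p_t a) k)"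
    by (rule Sq_eqI) (simp add: Sk_p_t Xm_p_t Sq_simps mult.assoc Sq_commute[OF Sk_commute_Et_inv])
  ultimately have "has_matrix_derivative (\<lambda>s. Xm p ** mexp (msc (-s) Sk)) (- (Xm p_t ** mpow (Sm p_t a) k)) t"
    by simp
  then show ?thesis unfolding has_matrix_derivative_def
    by (simp add: claimed_flow_XC Sk_def[symmetric] hvf_Ham_XC[OF assms])
qed

lemma claimed_flow_has_derivative_ZC:
  assumes "k = Suc n" and "a \<le> d"
  shows "((\<lambda>s. claimed_flow a k p s (ZC i j)) has_field_derivative hvf d (Ham a k) (ZC i j) p_t) (at t)"
proof -
  have "has_matrix_derivative (\<lambda>s. mexp (msc s Sk) ** Zm p ** mexp (msc (-s) Sk))
      (((Sk ** Et) ** Zm p + Et ** 0) ** Et_inv + (Et ** Zm p) ** (- (Sk ** Et_inv))) t"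
    using has_matrix_derivative_mult[OF has_matrix_derivative_mult[OF has_matrix_derivative_Et
        has_matrix_derivative_const] has_matrix_derivative_Et_inv]
    by (simp only: Et_def Et_inv_def)
  moreover have "((Sk ** Et) ** Zm p + Et ** 0) ** Et_inv + (Et ** Zm p) ** (- (Sk ** Et_inv))
      = mpow (Sm p_t a) k ** Zm p_t - Zm p_t ** mpow (Sm p_t a) k"
    by (rule Sq_eqI) (simp add: Sk_p_t Zm_p_t Sq_simps mult.assoc Sq_commute[OF Sk_commute_Et_inv])
  ultimately have "has_matrix_derivative (\<lambda>s. mexp (msc s Sk) ** Zm p ** mexp (msc (-s) Sk))
      (mpow (Sm p_t a) k ** Zm p_t - Zm p_t ** mpow (Sm p_t a) k) t"
    by simp
  then show ?thesis unfolding has_matrix_derivative_def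
    by (simp add: claimed_flow_ZC Sk_def[symmetric] hvf_Ham_ZC[OF assms])
qed

lemma claimed_flow_has_derivative_VC:
  assumes "k = Suc n" and "a \<le> d" and "b \<in> {1..d}"
  shows "((\<lambda>s. claimed_flow a k p s (VC b j)) has_field_derivative hvf d (Ham a k) (VC b j) p_t) (at t)"
proof (cases "b \<le> a")
  case True
  have "Vv p b v* (- (Sk ** Et_inv)) = - (Vv p_t b v* mpow (Sm p_t a) k)"
    using True by (simp add: Sk_p_t Vv_p_t vector_matrix_mul_assoc Sk_commute_Et_inv
        vector_matrix_mult_uminus)
  with has_field_derivative_vector_matrix_mult[OF has_matrix_derivative_Et_inv, of "Vv p b" j]
  show ?thesis using True
    by (simp add: claimed_flow_VC Sk_def[symmetric] hvf_Ham_VC[OF assms])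
qed (simp add: claimed_flow_VC hvf_Ham_VC[OF assms])

lemma claimed_flow_has_derivative_WC:
  assumes "k = Suc n" and "a \<le> d" and "b \<in> {1..d}"
  shows "((\<lambda>s. claimed_flow a k p s (WC b j)) has_field_derivative hvf d (Ham a k) (WC b j) p_t) (at t)"
proof (cases "b \<le> a")
  case True
  have "(Sk ** Et) *v Wv p b = mpow (Sm p_t a) k *v Wv p_t b"
    using True by (simp add: Sk_p_t Wv_p_t matrix_vector_mul_assoc)
  with has_field_derivative_matrix_vector_mult[OF has_matrix_derivative_Et, of "Wv p b" j]
  show ?thesis using True
    by (simp add: claimed_flow_WC Sk_def[symmetric] hvf_Ham_WC[OF assms])
qed (simp add: claimed_flow_WC hvf_Ham_WC[OF assms])

lemma claimed_flow_has_derivative: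
  assumes "k \<ge> 1" and "a \<le> d" and "c \<in> coords d"
  shows "((\<lambda>s. claimed_flow a k p s c) has_field_derivative hvf d (Ham a k) c p_t) (at t)"
proof -
  obtain n where k: "k = Suc n" using assms(1) by (cases k) auto
  from assms(3) consider (X) i j where "c = XC i j" | (Z) i j where "c = ZC i j"
    | (V) b j where "c = VC b j" "b \<in> {1..d}" | (W) b j where "c = WC b j" "b \<in> {1..d}"
    unfolding coords_def by blast
  then show ?thesis
    by cases (simp_all add: claimed_flow_has_derivative_XC[OF k assms(2)]
        claimed_flow_has_derivative_ZC[OF k assms(2)] claimed_flow_has_derivative_VC[OF k assms(2)]
        claimed_flow_has_derivative_WC[OF k assms(2)])
qed

end

theorem mainTheorem16:
  fixes d k a :: nat and q :: complex and p :: "'n::finite pt"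
  assumes "d \<ge> 1"
    and "q \<noteq> 0" and "\<forall>m::nat. m \<ge> 1 \<longrightarrow> q ^ m \<noteq> 1"
    and "a \<in> {1..d}" and "k \<ge> 1"
    and "p \<in> Mx d q"
  shows "claimed_flow a k p 0 = p \<and>
    (\<forall>t::complex. claimed_flow a k p t \<in> Mx d q \<and>
       (\<forall>c\<in>coords d. ((\<lambda>s. claimed_flow a k p s c) has_field_derivative
            hvf d (Ham a k) c (claimed_flow a k p t)) (at t)))"
  using claimed_flow_0 p_t_in_Mx[OF assms(6)] claimed_flow_has_derivative[OF assms(5)] assms(4)
  unfolding p_t_def by auto

end
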